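(* Let $v_1\ge v_2>0$, $m\in\mathbb{Z}_{\ge1}$, $0<b<m$ and $\alpha\in(0,1)$. A strategy profile $(X,Y)$ with $\mathbf{E}(X)=m+\alpha$ and $\mathbf{E}(Y)=b$ is a Nash equilibrium of the discrete all-pay auction with valuations $v_1,v_2$ if and only if $\frac{v_1}{2}>\lceil v_2/2\rceil>\frac{v_2}{2}$, $m=\lceil v_2/2\rceil-1$, $b=\frac{(\lceil v_2/2\rceil-1)\lceil v_2/2\rceil}{v_1/2}$, $\alpha=\frac{\lceil v_2/2\rceil}{v_2/2}\left(\frac{v_2}{2}-\lfloor v_2/2\rfloor\right)$, $Y=\left(1-\frac bm\right)\delta_0+\frac bmU_{\mathrm{E}}^m$, and $X\in\mathrm{conv}\big(\{(1-\alpha)U_{\mathrm{O}}^m+\alpha U_{\mathrm{O}}^{m+1}\}\cup\mathcal{X}^{m,\alpha}\big)$, where, with $\delta=\frac{2\lceil v_2/2\rceil-1}{\lceil v_2/2\rceil}$ and $\sigma=\frac{2\lceil v_2/2\rceil-1}{\lceil v_2/2\rceil-1}$: $\mathcal{X}^{m,\alpha}=\{\alpha\delta V_j^m+(1-\alpha\delta)U_{\mathrm{O}}^m:1\le j\le m\}$ if $v_2/2\le\lceil v_2/2\rceil-\frac12$, and $\mathcal{X}^{m,\alpha}=\{(1-\alpha)\sigma V_j^m+(1-(1-\alpha)\sigma)U_{\mathrm{O}}^{m+1}:1\le j\le m\}$ if $v_2/2>\lceil v_2/2\rceil-\frac12$. In this case $P^1(X,Y)=v_1+1-2\lceil v_2/2\rceil$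 and $P^2(Y,X)=0$.
   Context: Discrete all-pay auction: two players, 1 and 2, value a prize at $v_1$ and $v_2$ respectively, where $v_1\ge v_2>0$. A (mixed) strategy is a probability distribution on $\mathbb{Z}_{\ge 0}$ with finite mean, identified with a $\mathbb{Z}_{\ge0}$-valued random variable; the two players' choices are independent. If player 1 uses $X$ and player 2 uses $Y$, the expected payoffs are $P^1(X,Y)=v_1\Pr(X>Y)+\frac{v_1}{2}\Pr(X=Y)-\mathbf{E}(X)$ and $P^2(Y,X)=v_2\Pr(Y>X)+\frac{v_2}{2}\Pr(X=Y)-\mathbf{E}(Y)$. A Nash equilibrium of the all-pay auction is a pair $(X,Y)$ with $P^1(X,Y)\ge P^1(X',Y)$ and $P^2(Y,X)\ge P^2(Y',X)$ for all strategies $X',Y'$. $\delta_j$ denotes the point mass at $j$; $\lambda A+(1-\lambda)B$ denotes the mixture of distributions $A$ and $B$; $\mathrm{conv}$ denotes the set of all finite mixtures. Special distributions: for $m\ge1$, $U_{\mathrm{O}}^m$ is the uniform distribution on $\{1,3,\dots,2m-1\}$; for $m\ge0$, $U_{\mathrm{E}}^m$ is the uniform distribution on $\{0,2,\dots,2m\}$; for $m\ge1$ and $1\le j\le m$, $V_j^m=\sum_{i=1}^{j-1}\frac{2}{2m+1}\delta_{2i-1}+\frac{1}{2m+1}\delta_{2j-1}+\sum_{i=j}^{m}\frac{2}{2m+1}\delta_{2i}$. *)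

theory Defs
  imports "HOL-Probability.Probability"
begin

definition strategy :: "nat pmf \<Rightarrow> bool" where
  "strategy X \<longleftrightarrow> integrable (measure_pmf X) real"

definition mean :: "nat pmf \<Rightarrow> real" where
  "mean X = measure_pmf.expectation X real"

definition payoff1 :: "real \<Rightarrow> nat pmf \<Rightarrow> nat pmf \<Rightarrow> real" where
  "payoff1 v1 X Y =
     v1 * measure_pmf.prob (pair_pmf X Y) {(x, y). x > y}
     + v1 / 2 * measure_pmf.prob (pair_pmf X Y) {(x, y). x = y}
     - mean X"

definition payoff2 :: "real \<Rightarrow> nat pmf \<Rightarrow> nat pmf \<Rightarrow> real" where
  "payoff2 v2 Y X =
     v2 * measure_pmf.prob (pair_pmf X Y) {(x, y). y > x}
     + v2 / 2 * measure_pmf.prob (pair_pmf X Y) {(x, y). x = y}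
     - mean Y"

definition nash :: "real \<Rightarrow> real \<Rightarrow> nat pmf \<Rightarrow> nat pmf \<Rightarrow> bool" where
  "nash v1 v2 X Y \<longleftrightarrow> strategy X \<and> strategy Y \<and>
     (\<forall>X'. strategy X' \<longrightarrow> payoff1 v1 X' Y \<le> payoff1 v1 X Y) \<and>
     (\<forall>Y'. strategy Y' \<longrightarrow> payoff2 v2 Y' X \<le> payoff2 v2 Y X)"

text \<open>Mixture \<open>l A + (1 - l) B\<close> (meant for \<open>0 \<le> l \<le> 1\<close>).\<close>
definition mix :: "real \<Rightarrow> 'a pmf \<Rightarrow> 'a pmf \<Rightarrow> 'a pmf" where
  "mix l A B = bind_pmf (bernoulli_pmf l) (\<lambda>b. if b then A else B)"

definition conv_pmf :: "'a pmf set \<Rightarrow> 'a pmf set" where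
  "conv_pmf S = {join_pmf Q | Q. finite (set_pmf Q) \<and> set_pmf Q \<subseteq> S}"

definition UO :: "nat \<Rightarrow> nat pmf" where
  "UO m = pmf_of_set ((\<lambda>i. 2 * i - 1) ` {1..m})"

definition UE :: "nat \<Rightarrow> nat pmf" where
  "UE m = pmf_of_set ((\<lambda>i. 2 * i) ` {0..m})"

definition V :: "nat \<Rightarrow> nat \<Rightarrow> nat pmf" where
  "V m j = embed_pmf (\<lambda>k.
      (\<Sum>i\<in>{1..<j}. if k = 2 * i - 1 then 2 / (2 * real m + 1) else 0)
      + (if k = 2 * j - 1 then 1 / (2 * real m + 1) else 0)
      + (\<Sum>i\<in>{j..m}. if k = 2 * i then 2 / (2 * real m + 1) else 0))"

end

theory Submission
  imports Defs
begin

text \<open>Scale the densities of the two strategies to \<open>r = (v\<^sub>2/2) p\<^sub>X\<close> and \<open>s = (v\<^sub>1/2) p\<^sub>Y\<close>. The gain of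
  player 2 bidding \<open>k\<close> against \<open>X\<close> is then the score \<open>2 (r\<^sub>0 + ... + r\<^sub>k\<^sub>-\<^sub>1) + r\<^sub>k - k\<close> of \<open>r\<close>, and
  symmetrically for player 1, so an equilibrium is a pair of finitely supported nonnegative
  sequences whose scores are bounded by the payoffs, with equality on the support of the other
  sequence. Consecutive scores differ by \<open>r\<^sub>k + r\<^sub>k\<^sub>+\<^sub>1 - 1\<close>; a local analysis of these constraints,
  using that the mean \<open>m + \<alpha>\<close> of \<open>X\<close> is not an integer, forces \<open>s\<close> to be \<open>v\<^sub>1/2 - m\<close> at 0 and 1 at
  the even bids up to \<open>2m\<close>. This determines \<open>Y\<close>, the payoffs and the parameters. The admissible \<open>r\<close>
  then form a simplex whose \<open>m + 1\<close> vertices are the scaled densities of the generators, which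
  gives \<open>X\<close>; conversely every mixture of generators has nonpositive score vanishing on the
  support of \<open>Y\<close>, hence is a best response.\<close>

section \<open>Payoffs as expected gains of pure bids\<close>

lemma measure_pair_pmf_fst:
  "measure_pmf.prob (pair_pmf X Y) A = measure_pmf.expectation X (\<lambda>x. measure_pmf.prob Y {y. (x, y) \<in> A})"
proof -
  have "emeasure (measure_pmf (pair_pmf X Y)) A = (\<integral>\<^sup>+ z. indicator A z \<partial>measure_pmf (pair_pmf X Y))"
    by (simp add: nn_integral_indicator)
  also have "\<dots> = (\<integral>\<^sup>+ a. \<integral>\<^sup>+ b. indicator A (a, b) \<partial>measure_pmf Y \<partial>measure_pmf X)"
    by (rule nn_integral_pair_pmf')
  also have "\<dots> = (\<integral>\<^sup>+ a. ennreal (measure_pmf.prob Y {b. (a, b) \<in> A}) \<partial>measure_pmf X)"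
  proof (intro nn_integral_cong)
    fix a
    have "(\<lambda>b. indicator A (a, b) :: ennreal) = indicator {b. (a, b) \<in> A}"
      by (auto simp: indicator_def)
    thus "(\<integral>\<^sup>+ b. indicator A (a, b) \<partial>measure_pmf Y) = ennreal (measure_pmf.prob Y {b. (a, b) \<in> A})"
      by (simp add: nn_integral_indicator measure_pmf.emeasure_eq_measure)
  qed
  finally show ?thesis
    unfolding measure_def by (simp add: enn2real_nn_integral_eq_integral)
qed

lemma measure_pair_pmf_snd:
  "measure_pmf.prob (pair_pmf X Y) A = measure_pmf.expectation Y (\<lambda>y. measure_pmf.prob X {x. (x, y) \<in> A})"
proof -
  have "measure_pmf.prob (pair_pmf X Y) A = measure_pmf.prob (pair_pmf Y X) ((\<lambda>(a, b). (b, a)) -` A)"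
    by (subst pair_commute_pmf) (simp add: measure_map_pmf)
  also have "\<dots> = measure_pmf.expectation Y (\<lambda>y. measure_pmf.prob X {x. (y, x) \<in> (\<lambda>(a, b). (b, a)) -` A})"
    by (rule measure_pair_pmf_fst)
  finally show ?thesis by simp
qed

definition gain :: "real \<Rightarrow> nat pmf \<Rightarrow> nat \<Rightarrow> real" where
  "gain v Y k = v * (\<Sum>i<k. pmf Y i) + v / 2 * pmf Y k - real k"

lemma sum_pmf_le_1: "finite A \<Longrightarrow> (\<Sum>i\<in>A. pmf M i) \<le> 1"
  using measure_measure_pmf_finite[of A M] measure_pmf.prob_le_1[of M A] by simp

lemma integrable_gain:
  assumes "strategy X"
  shows "integrable (measure_pmf X) (gain v Y)"
proof -
  have "integrable (measure_pmf X) (\<lambda>x. \<Sum>i<x. pmf Y i)" "integrable (measure_pmf X) (pmf Y)"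
    by (auto intro!: measure_pmf.integrable_const_bound[where B=1]
        simp: sum_pmf_le_1 sum_nonneg pmf_le_1)
  thus ?thesis using assms unfolding strategy_def gain_def by simp
qed

lemma payoff1_eq_expectation_gain:
  assumes "strategy X"
  shows "payoff1 v X Y = measure_pmf.expectation X (gain v Y)"
proof -
  have "integrable (measure_pmf X) (\<lambda>x. \<Sum>i<x. pmf Y i)" "integrable (measure_pmf X) (pmf Y)"
    by (auto intro!: measure_pmf.integrable_const_bound[where B=1]
        simp: sum_pmf_le_1 sum_nonneg pmf_le_1)
  thus ?thesis using assms
    unfolding payoff1_def measure_pair_pmf_fst mean_def gain_def strategy_def
    by (simp add: measure_measure_pmf_finite lessThan_def measure_pmf_single)
qed

lemma payoff2_eq_expectation_gain:
  assumes "strategy Y"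
  shows "payoff2 v Y X = measure_pmf.expectation Y (gain v X)"
proof -
  have "integrable (measure_pmf Y) (\<lambda>y. \<Sum>i<y. pmf X i)" "integrable (measure_pmf Y) (pmf X)"
    by (auto intro!: measure_pmf.integrable_const_bound[where B=1]
        simp: sum_pmf_le_1 sum_nonneg pmf_le_1)
  thus ?thesis using assms
    unfolding payoff2_def measure_pair_pmf_snd mean_def gain_def strategy_def
    by (simp add: measure_measure_pmf_finite lessThan_def measure_pmf_single)
qed

lemma strategy_return_pmf: "strategy (return_pmf k)"
  unfolding strategy_def by (rule integrable_measure_pmf_finite) simp

lemma expectation_gain_eq_const:
  assumes "\<And>k. k \<in> set_pmf X \<Longrightarrow> gain v Y k = p"
  shows "measure_pmf.expectation X (gain v Y) = p"
proof -
  have "measure_pmf.expectation X (gain v Y) = measure_pmf.expectation X (\<lambda>_. p)"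
    by (intro integral_cong_AE) (auto simp: AE_measure_pmf_iff assms)
  thus ?thesis by simp
qed

lemma best_response_gain:
  assumes X: "strategy X" and best: "\<And>X'. strategy X' \<Longrightarrow> measure_pmf.expectation X' (gain v Y) \<le> p"
    and p: "measure_pmf.expectation X (gain v Y) = p"
  shows "gain v Y k \<le> p" and "k \<in> set_pmf X \<Longrightarrow> gain v Y k = p"
proof -
  show le: "gain v Y k \<le> p" for k
    using best[OF strategy_return_pmf, of k] by simp
  have "measure_pmf.expectation X (\<lambda>k. p - gain v Y k) = 0"
    using p integrable_gain[OF X] by (simp add: integral_diff)
  hence "AE k in measure_pmf X. p - gain v Y k = 0"
    using integrable_gain[OF X] le by (subst integral_nonneg_eq_0_iff_AE[symmetric]) auto
  thus "k \<in> set_pmf X \<Longrightarrow> gain v Y k = p" by (simp add: AE_measure_pmf_iff)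
qed

lemma nash_gain:
  assumes "nash v1 v2 X Y"
  shows "gain v1 Y k \<le> payoff1 v1 X Y" "k \<in> set_pmf X \<Longrightarrow> gain v1 Y k = payoff1 v1 X Y"
    "gain v2 X k \<le> payoff2 v2 Y X" "k \<in> set_pmf Y \<Longrightarrow> gain v2 X k = payoff2 v2 Y X"
  using assms
  by (auto simp: nash_def payoff1_eq_expectation_gain payoff2_eq_expectation_gain
      intro: best_response_gain)

lemma nash_of_gain:
  assumes X: "strategy X" and Y: "strategy Y"
    and le1: "\<And>k. gain v1 Y k \<le> p1" and eq1: "\<And>k. k \<in> set_pmf X \<Longrightarrow> gain v1 Y k = p1"
    and le2: "\<And>k. gain v2 X k \<le> p2" and eq2: "\<And>k. k \<in> set_pmf Y \<Longrightarrow> gain v2 X k = p2"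
  shows "nash v1 v2 X Y"
proof -
  have p1: "payoff1 v1 X Y = p1" and p2: "payoff2 v2 Y X = p2"
    using expectation_gain_eq_const eq1 eq2 X Y
    by (simp_all add: payoff1_eq_expectation_gain payoff2_eq_expectation_gain)
  have "measure_pmf.expectation X' (gain v Z) \<le> p"
    if "strategy X'" "\<And>k. gain v Z k \<le> p" for X' v Z p
    using that by (intro measure_pmf.integral_le_const integrable_gain) auto
  thus ?thesis
    using X Y le1 le2 p1 p2
    by (auto simp: nash_def payoff1_eq_expectation_gain payoff2_eq_expectation_gain)
qed

section \<open>The scaled equilibrium conditions\<close>

definition score :: "(nat \<Rightarrow> real) \<Rightarrow> nat \<Rightarrow> real" where
  "score f k = 2 * (\<Sum>i<k. f i) + f k - real k"

lemma score_0: "score f 0 = f 0"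
  unfolding score_def by simp

lemma score_Suc: "score f (Suc k) = score f k + f k + f (Suc k) - 1"
  unfolding score_def by simp

lemma gain_eq_score: "gain (2 * c) G k = score (\<lambda>i. c * pmf G i) k"
  unfolding gain_def score_def by (simp add: sum_distrib_left mult.assoc)

lemma sum_times_prefix_square:
  fixes f :: "nat \<Rightarrow> real"
  shows "(\<Sum>k<n. f k * (2 * (\<Sum>i<k. f i) + f k)) = (\<Sum>k<n. f k)\<^sup>2"
  by (induction n) (simp_all add: power2_eq_square algebra_simps)

lemma sum_times_prefix_bilinear:
  fixes f g :: "nat \<Rightarrow> real"
  shows "(\<Sum>k<n. f k * (2 * (\<Sum>i<k. g i) + g k) + g k * (2 * (\<Sum>i<k. f i) + f k))
    = 2 * (\<Sum>k<n. f k) * (\<Sum>k<n. g k)"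
  by (induction n) (simp_all add: algebra_simps)

lemma alternating_eq: "\<forall>i<L. f i + f (Suc i) = (1::real) \<Longrightarrow> i \<le> L \<Longrightarrow> f i = (if even i then f 0 else 1 - f 0)"
proof (induction i)
  case 0 thus ?case by simp
next
  case (Suc i)
  have A: "f i + f (Suc i) = 1" using Suc.prems by simp
  have B: "f i = (if even i then f 0 else 1 - f 0)" using Suc.prems Suc.IH by simp
  have "f (Suc i) = 1 - f i" using A by linarith
  thus ?case using B by (cases "even i") simp_all
qed

lemma sum_alternating:
  "(\<Sum>k<2*n. (if even k then a else 1 - a)) = real n \<and>
   (\<Sum>k<2*n. real k * (if even k then a else 1 - a)) = real n ^ 2 - real n * a"
proof (induction n)
  case 0 thus ?case by simp
next
  case (Suc n)
  have e: "2 * Suc n = Suc (Suc (2*n))" by simp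
  show ?case using Suc unfolding e by (simp add: power2_eq_square algebra_simps)
qed

lemma sum_lessThan_eq_zero_tail:
  fixes f :: "nat \<Rightarrow> 'a :: comm_monoid_add"
  assumes "\<And>k. M \<le> k \<Longrightarrow> f k = 0" "\<And>k. N \<le> k \<Longrightarrow> f k = 0"
  shows "(\<Sum>k<M. f k) = (\<Sum>k<N. f k)"
proof -
  have *: "(\<Sum>k<A. f k) = (\<Sum>k<max M N. f k)" if "\<And>k. A \<le> k \<Longrightarrow> f k = 0" "A \<le> max M N" for A
    by (rule sum.mono_neutral_left) (use that in auto)
  show ?thesis using *[of M] *[of N] assms by simp
qed

lemma sums_alternating:
  fixes f :: "nat \<Rightarrow> real"
  assumes alt: "\<forall>i<L. f i + f (Suc i) = 1" and z: "\<forall>i>L. f i = 0" and NL: "\<And>k. N \<le> k \<Longrightarrow> f k = 0"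
  shows "(\<exists>n. L = 2*n \<and> (\<Sum>k<N. f k) = real n + f 0 \<and> (\<Sum>k<N. real k * f k) = real n * (real n + f 0))
       \<or> (\<exists>n. Suc L = 2*n \<and> (\<Sum>k<N. f k) = real n \<and> (\<Sum>k<N. real k * f k) = real n ^ 2 - real n * f 0)"
proof -
  define g where "g k = (if even k then f 0 else 1 - f 0)" for k :: nat
  have fg: "k \<le> L \<Longrightarrow> f k = g k" for k using alternating_eq[OF alt] unfolding g_def by simp
  have s1: "(\<Sum>k<N. f k) = (\<Sum>k<Suc L. g k)"
    using sum_lessThan_eq_zero_tail[of "Suc L" f N] z NL fg by (simp add: Suc_le_eq)
  have s2: "(\<Sum>k<N. real k * f k) = (\<Sum>k<Suc L. real k * g k)"
  proof -
    have "(\<Sum>k<N. real k * f k) = (\<Sum>k<Suc L. real k * f k)"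
      using sum_lessThan_eq_zero_tail[of "Suc L" "\<lambda>k. real k * f k" N] z NL by (simp add: Suc_le_eq)
    also have "\<dots> = (\<Sum>k<Suc L. real k * g k)" using fg by (intro sum.cong) auto
    finally show ?thesis .
  qed
  show ?thesis
  proof (cases "even L")
    case True
    then obtain n where n: "L = 2*n" by (auto elim: evenE)
    have "(\<Sum>k<Suc L. g k) = real n + f 0" "(\<Sum>k<Suc L. real k * g k) = real n * (real n + f 0)"
      using sum_alternating[where n=n and a="f 0"] n unfolding g_def by (simp_all add: power2_eq_square algebra_simps)
    thus ?thesis using s1 s2 n by auto
  next
    case False
    then obtain n where n: "Suc L = 2*n" by (metis even_Suc evenE)
    have "(\<Sum>k<Suc L. g k) = real n" "(\<Sum>k<Suc L. real k * g k) = real n ^ 2 - real n * f 0"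
      using sum_alternating[where n=n and a="f 0"] n unfolding g_def by simp_all
    thus ?thesis using s1 s2 n by auto
  qed
qed

text \<open>\<open>r\<close> and \<open>s\<close> stand for the scaled densities of \<open>X\<close> and \<open>Y\<close>, and \<open>p1\<close>, \<open>p2\<close> for the payoffs; \<open>D k\<close>
  and \<open>E k\<close> measure how far the bid \<open>k\<close> falls short of a best reply for player 2 resp. player 1.\<close>
locale scaled_equilibrium =
  fixes r s :: "nat \<Rightarrow> real" and p1 p2 :: real and N :: nat
  assumes r_nonneg: "\<And>k. 0 \<le> r k" and s_nonneg: "\<And>k. 0 \<le> s k"
    and r_vanishes: "\<And>k. N \<le> k \<Longrightarrow> r k = 0" and s_vanishes: "\<And>k. N \<le> k \<Longrightarrow> s k = 0"
    and score_r_le: "\<And>k. score r k \<le> p2" and score_r_eq: "\<And>k. 0 < s k \<Longrightarrow> score r k = p2"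
    and score_s_le: "\<And>k. score s k \<le> p1" and score_s_eq: "\<And>k. 0 < r k \<Longrightarrow> score s k = p1"
begin

definition D where "D k = score r k - p2"
definition E where "E k = score s k - p1"

lemma D_nonpos: "D k \<le> 0" using score_r_le unfolding D_def by simp
lemma E_nonpos: "E k \<le> 0" using score_s_le unfolding E_def by simp
lemma D_eq_0: "0 < s k \<Longrightarrow> D k = 0" using score_r_eq unfolding D_def by simp
lemma E_eq_0: "0 < r k \<Longrightarrow> E k = 0" using score_s_eq unfolding E_def by simp
lemma D_Suc: "D (Suc k) = D k + r k + r (Suc k) - 1" unfolding D_def by (simp add: score_Suc)
lemma E_Suc: "E (Suc k) = E k + s k + s (Suc k) - 1" unfolding E_def by (simp add: score_Suc)
lemma D_0: "D 0 = r 0 - p2" unfolding D_def by (simp add: score_0)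
lemma E_0: "E 0 = s 0 - p1" unfolding E_def by (simp add: score_0)

lemma r0_le_p2: "r 0 \<le> p2" using D_nonpos[of 0] D_0 by simp
lemma s0_le_p1: "s 0 \<le> p1" using E_nonpos[of 0] E_0 by simp
lemma p2_nonneg: "0 \<le> p2" using r0_le_p2 r_nonneg[of 0] by simp
lemma p1_nonneg: "0 \<le> p1" using s0_le_p1 s_nonneg[of 0] by simp

lemma sum_r_lessThan_le: "(\<Sum>i<K. r i) \<le> (\<Sum>i<N. r i)"
proof -
  have "(\<Sum>i<K. r i) \<le> (\<Sum>i<max K N. r i)"
    by (intro sum_mono2) (auto simp: r_nonneg)
  also have "\<dots> = (\<Sum>i<N. r i)" using sum_lessThan_eq_zero_tail[of "max K N" r N] r_vanishes by simp
  finally show ?thesis .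
qed

lemma payoff_mass_identity: "(\<Sum>k<N. real k * r k) + (\<Sum>k<N. real k * s k) + p1 * (\<Sum>k<N. r k) + p2 * (\<Sum>k<N. s k)
   = 2 * (\<Sum>k<N. r k) * (\<Sum>k<N. s k)"
proof -
  have a: "r k * E k = 0" for k using E_eq_0[of k] r_nonneg[of k] by (cases "r k > 0") auto
  have b: "s k * D k = 0" for k using D_eq_0[of k] s_nonneg[of k] by (cases "s k > 0") auto
  have "(\<Sum>k<N. r k * E k) = 0" by (simp only: a sum.neutral_const)
  hence A: "(\<Sum>k<N. r k * (2*(\<Sum>i<k. s i) + s k)) = (\<Sum>k<N. real k * r k) + p1 * (\<Sum>k<N. r k)"
    unfolding E_def score_def by (simp add: algebra_simps sum.distrib sum_subtractf sum_distrib_left)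
  have "(\<Sum>k<N. s k * D k) = 0" by (simp only: b sum.neutral_const)
  hence B: "(\<Sum>k<N. s k * (2*(\<Sum>i<k. r i) + r k)) = (\<Sum>k<N. real k * s k) + p2 * (\<Sum>k<N. s k)"
    unfolding D_def score_def by (simp add: algebra_simps sum.distrib sum_subtractf sum_distrib_left)
  show ?thesis using sum_times_prefix_bilinear[of r s N] A B by (simp add: sum.distrib)
qed

lemma square_mass_le: "(\<Sum>k<N. s k)^2 \<le> (\<Sum>k<N. real k * s k) + p1 * (\<Sum>k<N. s k)"
proof -
  have "s k * E k \<le> 0" for k using E_nonpos[of k] s_nonneg[of k] by (simp add: mult_nonneg_nonpos)
  hence "(\<Sum>k<N. s k * E k) \<le> 0" by (simp add: sum_nonpos)
  hence "(\<Sum>k<N. s k * (2*(\<Sum>i<k. s i) + s k)) \<le> (\<Sum>k<N. real k * s k) + p1 * (\<Sum>k<N. s k)"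
    unfolding E_def score_def by (simp add: algebra_simps sum.distrib sum_subtractf sum_distrib_left)
  thus ?thesis using sum_times_prefix_square[of s N] by simp
qed

lemma p1_pos:
  fixes x y b \<alpha> :: real and m :: nat
  assumes xdef: "x = (\<Sum>k<N. r k)" and ydef: "y = (\<Sum>k<N. s k)" and x0: "0 < x" and xy: "x \<le> y"
    and mx: "(\<Sum>k<N. real k * r k) = x * (real m + \<alpha>)" and al: "0 < \<alpha>"
    and my: "(\<Sum>k<N. real k * s k) = y * b" and bm: "b < real m"
  shows "0 < p1"
proof (rule ccontr)
  assume "\<not> 0 < p1"
  hence p10: "p1 = 0" using p1_nonneg by simp
  have y0: "0 < y" using x0 xy by simp
  have "y * y \<le> y * b" using square_mass_le p10 ydef my by (simp add: power2_eq_square)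
  hence yb: "y \<le> b" using y0 by simp
  have "0 \<le> p2 * y" using p2_nonneg y0 by simp
  hence A: "x * (real m + \<alpha>) + y * b \<le> 2 * x * y" using payoff_mass_identity xdef ydef mx my p10 by simp
  have "y < real m + \<alpha>" using yb bm al by simp
  hence B: "x * y < x * (real m + \<alpha>)" using x0 by simp
  have C: "y * y \<le> y * b" using yb y0 by simp
  have "y * y < x * y" using A B C by linarith
  thus False using xy y0 by (simp add: mult_strict_right_mono_neg not_less mult_right_mono)
qed

lemma s0_pos:
  assumes "0 < p1" and "\<exists>k. 0 < s k"
  shows "0 < s 0"
proof (rule ccontr)
  assume "\<not> 0 < s 0"
  define t where "t = (LEAST k. 0 < s k)"
  have st: "0 < s t" unfolding t_def using assms(2) by (metis LeastI)
  have below: "k < t \<Longrightarrow> s k = 0" for k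
    using not_less_Least[of k "\<lambda>k. 0 < s k"] s_nonneg[of k] unfolding t_def by linarith
  have t1: "t \<ge> 1" using st \<open>\<not> 0 < s 0\<close> by (cases t) auto
  have ss: "(\<Sum>i<t. s i) = 0" using below by simp
  have rb: "k < t \<Longrightarrow> r k = 0" for k
  proof (rule ccontr)
    assume "k < t" "r k \<noteq> 0"
    hence "0 < r k" using r_nonneg[of k] by simp
    hence "E k = 0" by (rule E_eq_0)
    moreover have "(\<Sum>i<k. s i) = 0" using below \<open>k<t\<close> by simp
    ultimately show False using below[OF \<open>k<t\<close>] assms(1) unfolding E_def score_def by simp
  qed
  have "D t = 0" using st by (rule D_eq_0)
  hence "r t = real t + p2" using rb unfolding D_def score_def by simp
  hence "0 < r t" using t1 p2_nonneg by simp
  hence "E t = 0" by (rule E_eq_0)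
  hence et: "s t = real t + p1" using ss unfolding E_def score_def by simp
  have "E (Suc t) \<le> 0" by (rule E_nonpos)
  hence "s t + s (Suc t) \<le> 1" using E_Suc[of t] \<open>E t = 0\<close> by simp
  thus False using et t1 assms(1) s_nonneg[of "Suc t"] by simp
qed

end

locale scaled_equilibrium_pos = scaled_equilibrium +
  assumes s0: "0 < s 0"
begin

lemma D_0_eq_0: "D 0 = 0" using D_eq_0 s0 by blast
lemma p2_eq_r0: "p2 = r 0" using D_0_eq_0 D_0 by simp

lemma r_le_1: "r k \<le> 1"
proof (cases k)
  case 0
  have "D 1 \<le> 0" by (rule D_nonpos)
  thus ?thesis using D_Suc[of 0] D_0_eq_0 r_nonneg[of 1] 0 by simp
next
  case (Suc j)
  show ?thesis
  proof (cases "0 < r k")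
    case False thus ?thesis by simp
  next
    case True
    hence "E k = 0" by (rule E_eq_0)
    hence "s j + s k \<ge> 1" using E_Suc[of j] E_nonpos[of j] Suc by simp
    hence "0 < s j \<or> 0 < s k" using s_nonneg[of j] s_nonneg[of k] by linarith
    thus ?thesis
    proof
      assume "0 < s j" hence "D j = 0" by (rule D_eq_0)
      thus ?thesis using D_Suc[of j] D_nonpos[of k] Suc r_nonneg[of j] by simp
    next
      assume "0 < s k" hence "D k = 0" by (rule D_eq_0)
      thus ?thesis using D_Suc[of k] D_nonpos[of "Suc k"] r_nonneg[of "Suc k"] by simp
    qed
  qed
qed

lemma s_le_1: "1 \<le> k \<Longrightarrow> s k \<le> 1"
proof -
  assume "1 \<le> k"
  then obtain j where Suc: "k = Suc j" by (cases k) auto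
  show ?thesis
  proof (cases "0 < s k")
    case False thus ?thesis by simp
  next
    case True
    hence "D k = 0" by (rule D_eq_0)
    hence "r j + r k \<ge> 1" using D_Suc[of j] D_nonpos[of j] Suc by simp
    hence "0 < r j \<or> 0 < r k" using r_nonneg[of j] r_nonneg[of k] by linarith
    thus ?thesis
    proof
      assume "0 < r j" hence "E j = 0" by (rule E_eq_0)
      thus ?thesis using E_Suc[of j] E_nonpos[of k] Suc s_nonneg[of j] by simp
    next
      assume "0 < r k" hence "E k = 0" by (rule E_eq_0)
      thus ?thesis using E_Suc[of k] E_nonpos[of "Suc k"] s_nonneg[of "Suc k"] by simp
    qed
  qed
qed

lemma s0_le_1: "0 < r 0 \<Longrightarrow> s 0 \<le> 1"
  using E_eq_0[of 0] E_Suc[of 0] E_nonpos[of 1] s_nonneg[of 1] by simp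

lemma s_no_double_gap: "0 < s (Suc (Suc j)) \<Longrightarrow> 0 < s (Suc j) \<or> 0 < s j"
proof (rule ccontr)
  assume a: "0 < s (Suc (Suc j))" and "\<not> (0 < s (Suc j) \<or> 0 < s j)"
  hence z: "s (Suc j) = 0" "s j = 0" using s_nonneg[of j] s_nonneg[of "Suc j"] by auto
  have r1: "r (Suc j) = 0"
  proof (rule ccontr)
    assume "r (Suc j) \<noteq> 0" hence "0 < r (Suc j)" using r_nonneg[of "Suc j"] by simp
    hence "E (Suc j) = 0" by (rule E_eq_0)
    thus False using E_Suc[of j] E_nonpos[of j] z by simp
  qed
  have "D (Suc (Suc j)) = 0" using a by (rule D_eq_0)
  hence "r (Suc (Suc j)) \<ge> 1" using D_Suc[of "Suc j"] D_nonpos[of "Suc j"] r1 by simp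
  hence "E (Suc (Suc j)) = 0" by (intro E_eq_0) simp
  moreover have "s (Suc (Suc j)) \<le> 1" using s_le_1[of "Suc (Suc j)"] by simp
  ultimately show False using E_Suc[of j] E_Suc[of "Suc j"] E_nonpos[of j] z by simp
qed

lemma r_no_double_gap: "0 < r (Suc (Suc j)) \<Longrightarrow> 0 < r (Suc j) \<or> 0 < r j"
proof (rule ccontr)
  assume a: "0 < r (Suc (Suc j))" and "\<not> (0 < r (Suc j) \<or> 0 < r j)"
  hence z: "r (Suc j) = 0" "r j = 0" using r_nonneg[of j] r_nonneg[of "Suc j"] by auto
  have s1: "s (Suc j) = 0"
  proof (rule ccontr)
    assume "s (Suc j) \<noteq> 0" hence "0 < s (Suc j)" using s_nonneg[of "Suc j"] by simp
    hence "D (Suc j) = 0" by (rule D_eq_0)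
    thus False using D_Suc[of j] D_nonpos[of j] z by simp
  qed
  have "E (Suc (Suc j)) = 0" using a by (rule E_eq_0)
  hence "s (Suc (Suc j)) \<ge> 1" using E_Suc[of "Suc j"] E_nonpos[of "Suc j"] s1 by simp
  hence "D (Suc (Suc j)) = 0" by (intro D_eq_0) simp
  moreover have "r (Suc (Suc j)) \<le> 1" using r_le_1 by simp
  ultimately show False using D_Suc[of j] D_Suc[of "Suc j"] D_nonpos[of j] z by simp
qed

lemma s_next_pos: "0 < s j \<Longrightarrow> 0 < s l \<Longrightarrow> j < l \<Longrightarrow> 0 < s (Suc j) \<or> 0 < s (Suc (Suc j))"
proof (induction l rule: less_induct)
  case (less l)
  show ?case
  proof (cases "l \<le> Suc (Suc j)")
    case True
    thus ?thesis using less.prems by (cases "l = Suc j") (auto simp: le_Suc_eq)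
  next
    case False
    then obtain i where l: "l = Suc (Suc i)" and "j < i" by (cases l; cases "l - 1"; auto)
    from s_no_double_gap[of i] less.prems l have "0 < s (Suc i) \<or> 0 < s i" by simp
    thus ?thesis
    proof
      assume "0 < s (Suc i)" thus ?thesis using less.IH[of "Suc i"] less.prems l \<open>j<i\<close> by simp
    next
      assume "0 < s i" thus ?thesis using less.IH[of "i"] less.prems l \<open>j<i\<close> by simp
    qed
  qed
qed

lemma r_next_pos: "0 < r j \<Longrightarrow> 0 < r l \<Longrightarrow> j < l \<Longrightarrow> 0 < r (Suc j) \<or> 0 < r (Suc (Suc j))"
proof (induction l rule: less_induct)
  case (less l)
  show ?case
  proof (cases "l \<le> Suc (Suc j)")
    case True
    thus ?thesis using less.prems by (cases "l = Suc j") (auto simp: le_Suc_eq)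
  next
    case False
    then obtain i where l: "l = Suc (Suc i)" and "j < i" by (cases l; cases "l - 1"; auto)
    from r_no_double_gap[of i] less.prems l have "0 < r (Suc i) \<or> 0 < r i" by simp
    thus ?thesis
    proof
      assume "0 < r (Suc i)" thus ?thesis using less.IH[of "Suc i"] less.prems l \<open>j<i\<close> by simp
    next
      assume "0 < r i" thus ?thesis using less.IH[of "i"] less.prems l \<open>j<i\<close> by simp
    qed
  qed
qed


lemma common_support_down:
  assumes "0 < r (Suc j)" "0 < s (Suc j)" "0 < r (Suc (Suc j))" "0 < s (Suc (Suc j))"
  shows "0 < r j \<and> 0 < s j"
proof -
  have "D (Suc j) = 0" "D (Suc (Suc j)) = 0" using assms D_eq_0 by auto
  moreover have "E (Suc j) = 0" "E (Suc (Suc j)) = 0" using assms E_eq_0 by auto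
  ultimately show ?thesis using D_Suc[of j] D_Suc[of "Suc j"] E_Suc[of j] E_Suc[of "Suc j"]
      D_nonpos[of j] E_nonpos[of j] assms by simp
qed

lemma common_support_start: "0 < r j \<Longrightarrow> 0 < s j \<Longrightarrow> 0 < r (Suc j) \<Longrightarrow> 0 < s (Suc j) \<Longrightarrow> 0 < r 0 \<and> 0 < r 1 \<and> 0 < s 1"
proof (induction j)
  case 0 thus ?case by simp
next
  case (Suc j)
  from common_support_down[of j] Suc.prems have "0 < r j \<and> 0 < s j" by simp
  thus ?case using Suc by simp
qed

lemma r_alternation_step_down:
  assumes s: "0 < s (Suc (Suc k))" and r: "r (Suc (Suc k)) = 0" "r (Suc (Suc (Suc k))) = 1"
  shows "r (Suc k) = 1 \<and> r k = 0 \<and> 0 < s k"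
proof -
  have Dk: "D (Suc (Suc k)) = 0" using s D_eq_0 by simp
  from s_no_double_gap[of k] s have "0 < s (Suc k) \<or> 0 < s k" by simp
  thus ?thesis
  proof
    assume "0 < s (Suc k)"
    hence D1: "D (Suc k) = 0" by (rule D_eq_0)
    hence r1: "r (Suc k) = 1" using D_Suc[of "Suc k"] Dk r by simp
    have sk: "0 < s k"
    proof (rule ccontr)
      assume "\<not> 0 < s k" hence "s k = 0" using s_nonneg[of k] by simp
      moreover have "E (Suc k) = 0" using r1 E_eq_0 by simp
      ultimately show False
        using E_Suc[of k] E_Suc[of "Suc k"] E_nonpos[of k] E_nonpos[of "Suc (Suc k)"] s by simp
    qed
    hence "D k = 0" by (rule D_eq_0)
    thus ?thesis using D_Suc[of k] D1 r1 sk by simp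
  next
    assume sk: "0 < s k"
    hence "D k = 0" by (rule D_eq_0)
    hence "r k + 2 * r (Suc k) = 2" "r k + r (Suc k) \<le> 1"
      using D_Suc[of k] D_Suc[of "Suc k"] Dk r D_nonpos[of "Suc k"] by auto
    thus ?thesis using sk r_le_1[of "Suc k"] r_nonneg[of k] by simp
  qed
qed

lemma r_alternates_below: "0 < s k \<Longrightarrow> r k = 0 \<Longrightarrow> r (Suc k) = 1 \<Longrightarrow>
    \<forall>i \<le> Suc k. r i = (if even (i + k) then 0 else 1)"
proof (induction k rule: less_induct)
  case (less k)
  consider "k = 0" | "k = 1" | k2 where "k = Suc (Suc k2)" by (metis One_nat_def not0_implies_Suc)
  thus ?case
  proof cases
    case 1 thus ?thesis using less.prems by (auto simp: le_Suc_eq)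
  next
    case 2
    have "D 1 = 0" using less.prems 2 D_eq_0 by simp
    hence "r 0 = 1" using D_Suc[of 0] D_0_eq_0 less.prems 2 by simp
    thus ?thesis using less.prems 2 by (auto simp: le_Suc_eq)
  next
    case 3
    hence "r (Suc k2) = 1 \<and> r k2 = 0 \<and> 0 < s k2" using r_alternation_step_down less.prems by simp
    hence IH: "\<forall>i \<le> Suc k2. r i = (if even (i + k2) then 0 else 1)"
      using less.IH[of k2] 3 by simp
    show ?thesis
    proof (intro allI impI)
      fix i assume "i \<le> Suc k"
      hence "i \<le> Suc k2 \<or> i = k \<or> i = Suc k" using 3 by auto
      thus "r i = (if even (i + k) then 0 else 1)" using IH less.prems 3 by auto
    qed
  qed
qed

definition parity :: "nat \<Rightarrow> nat \<Rightarrow> real" where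
  "parity c i = (if even (i + c) then 1 else 0)"

lemma parity_Suc: "parity c (Suc i) = 1 - parity c i" unfolding parity_def by simp

lemma D_parity_eq_0: "\<forall>i \<le> K. r i = parity c i \<Longrightarrow> i \<le> K \<Longrightarrow> D i = 0"
proof (induction i)
  case 0 thus ?case using D_0_eq_0 by simp
next
  case (Suc i)
  thus ?case using D_Suc[of i] parity_Suc[of c i] by simp
qed

lemma s_alternates_down:
  assumes pt: "\<forall>i \<le> K. r i = parity c i" and ev: "even (Suc K + c)"
    and s: "s (Suc K) = 0" "E (Suc K) = 0" "1 \<le> s K"
  shows "Suc K = q + 2 * Suc t \<Longrightarrow> s q = 0 \<and> 1 \<le> s (Suc q)"
proof (induction t arbitrary: q)
  case 0
  hence "Suc q = K" by simp
  hence s1: "1 \<le> s (Suc q)" using s by simp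
  have "r q = 1" using pt \<open>Suc q = K\<close> ev 0 unfolding parity_def by auto
  hence "E q = 0" using E_eq_0 by simp
  hence "s q + 2 * s (Suc q) + s (Suc K) = 2"
    using E_Suc[of q] E_Suc[of "Suc q"] s 0 by (simp add: numeral_2_eq_2)
  thus ?case using s1 s s_nonneg[of q] by simp
next
  case (Suc t)
  have "s (Suc (Suc q)) = 0 \<and> 1 \<le> s (Suc (Suc (Suc q)))"
    using Suc.IH[of "Suc (Suc q)"] Suc.prems by (simp add: algebra_simps)
  moreover have "r (Suc (Suc q)) = 1" "r q = 1"
    using pt Suc.prems ev unfolding parity_def by auto
  ultimately have A: "s (Suc (Suc q)) = 0" "E (Suc (Suc q)) = 0" "E q = 0"
    using E_eq_0 by auto
  have s1: "1 \<le> s (Suc q)" using E_Suc[of "Suc q"] A E_nonpos[of "Suc q"] by simp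
  have "s q + 2 * s (Suc q) + s (Suc (Suc q)) = 2"
    using E_Suc[of q] E_Suc[of "Suc q"] A by simp
  thus ?case using s1 A s_nonneg[of q] by simp
qed

lemma s_zero_below_fraction:
  assumes pt: "\<forall>i \<le> K. r i = parity c i" and pK: "parity c (Suc K) = 1"
    and rp: "0 < r (Suc K)" "r (Suc K) < 1"
    and j: "j \<le> K" "even (j + c)"
  shows "s j = 0"
proof -
  have "parity c K = 0" using pK parity_Suc[of c K] by simp
  hence "D (Suc K) < 0" using D_Suc[of K] D_parity_eq_0[OF pt] pt rp by simp
  hence sp: "s (Suc K) = 0" using D_eq_0[of "Suc K"] s_nonneg[of "Suc K"] by linarith
  have Ep: "E (Suc K) = 0" using rp E_eq_0 by simp
  have sK: "1 \<le> s K" using E_Suc[of K] Ep E_nonpos[of K] sp by simp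
  have ev: "even (Suc K + c)" using pK unfolding parity_def by (simp split: if_splits)
  have "even (Suc K - j)" using j ev by (simp add: even_diff_nat)
  then obtain u where u: "Suc K - j = 2 * u" by (blast elim: evenE)
  moreover have "u \<noteq> 0" using u j by auto
  then obtain t where "u = Suc t" by (cases u) auto
  ultimately have "Suc K = j + 2 * Suc t" using j by simp
  thus ?thesis using s_alternates_down[OF pt ev sp Ep sK] by simp
qed

lemma r_zero_after_two_zeros:
  assumes "r K = 0" "r (Suc K) = 0"
  shows "\<forall>i>K. r i = 0"
proof -
  have "K < i \<Longrightarrow> r i = 0" for i
  proof (induction i rule: less_induct)
    case (less i)
    show ?case
    proof (cases "i = Suc K")
      case True thus ?thesis using assms by simp
    next
      case False
      define i0 where "i0 = i - 2"
      have i: "i = Suc (Suc i0)" "K \<le> i0" using less.prems False unfolding i0_def by auto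
      show ?thesis
      proof (rule ccontr)
        assume "r i \<noteq> 0" hence "0 < r i" using r_nonneg[of i] by simp
        hence "0 < r (Suc i0) \<or> 0 < r i0" using r_no_double_gap i by simp
        moreover have "r (Suc i0) = 0" using less.IH[of "Suc i0"] i by simp
        moreover have "r i0 = 0"
          using less.IH[of i0] i assms by (cases "i0 = K") auto
        ultimately show False by simp
      qed
    qed
  qed
  thus ?thesis by blast
qed

lemma r_parity_step:
  assumes pt: "\<forall>i \<le> K. r i = parity c i" and j: "j \<le> K" "even (j + c)" "0 < s j"
  shows "r (Suc K) = parity c (Suc K) \<or> (\<forall>i>K. r i = 0)"
proof (cases "parity c (Suc K) = 0")
  case True
  hence "r K = 1" using parity_Suc[of c K] pt by simp
  hence "r (Suc K) \<le> 0" using D_Suc[of K] D_parity_eq_0[OF pt] D_nonpos[of "Suc K"] by simp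
  thus ?thesis using True r_nonneg[of "Suc K"] by simp
next
  case False
  hence p1: "parity c (Suc K) = 1" unfolding parity_def by (simp split: if_splits)
  hence rK: "r K = 0" using parity_Suc[of c K] pt by simp
  show ?thesis
  proof (cases "r (Suc K) = 0")
    case True
    thus ?thesis using r_zero_after_two_zeros[OF rK] by blast
  next
    case False
    have "\<not> (0 < r (Suc K) \<and> r (Suc K) < 1)"
    proof
      assume "0 < r (Suc K) \<and> r (Suc K) < 1"
      hence "s j = 0" using s_zero_below_fraction[OF pt p1] j by blast
      thus False using j by simp
    qed
    thus ?thesis using False p1 r_le_1[of "Suc K"] r_nonneg[of "Suc K"] by auto
  qed
qed

lemma r_alternating_then_zero:
  assumes pt: "\<forall>i \<le> P. r i = parity c i"
    and j: "j \<le> P" "even (j + c)" "0 < s j"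
  shows "\<exists>L. (\<forall>i<L. r i + r (Suc i) = 1) \<and> (\<forall>i>L. r i = 0)"
proof (rule ccontr)
  assume nL: "\<not> ?thesis"
  have "\<forall>i \<le> K. r i = parity c i" if "P \<le> K" for K
    using that
  proof (induction K rule: dec_induct)
    case (step K)
    have "\<forall>i<K. r i + r (Suc i) = 1" using step.IH parity_Suc by simp
    hence "\<not> (\<forall>i>K. r i = 0)" using nL by blast
    moreover have "j \<le> K" using j step.hyps by simp
    ultimately have "r (Suc K) = parity c (Suc K)" using r_parity_step[OF step.IH _ j(2,3)] by blast
    thus ?case using step.IH by (auto simp: le_Suc_eq)
  qed (use pt in simp)
  hence "\<forall>i \<le> P + Suc N. r i = parity c i" by (metis le_add1)
  hence "r N = parity c N" "r (Suc N) = parity c (Suc N)" by auto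
  moreover have "r N = 0" "r (Suc N) = 0" using r_vanishes by auto
  ultimately show False using parity_Suc[of c N] by simp
qed

lemma s_pos_iff_even_below:
  assumes nc: "\<And>k. \<not> (0 < s k \<and> 0 < s (Suc k))" and d: "0 < s d"
  shows "k \<le> d \<Longrightarrow> 0 < s k \<longleftrightarrow> even k"
proof (induction k rule: less_induct)
  case (less k)
  consider "k = 0" | "k = 1" | i where "k = Suc (Suc i)" by (metis One_nat_def not0_implies_Suc)
  thus ?case
  proof cases
    case 1 thus ?thesis using s0 by simp
  next
    case 2 thus ?thesis using s0 nc[of 0] by auto
  next
    case 3
    have IHi: "0 < s i \<longleftrightarrow> even i" and IHi1: "0 < s (Suc i) \<longleftrightarrow> even (Suc i)"
      using less.IH[of i] less.IH[of "Suc i"] less.prems 3 by simp_all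
    show ?thesis
    proof (cases "even k")
      case True
      hence "0 < s i" "\<not> 0 < s (Suc i)" using IHi IHi1 3 by auto
      hence "0 < s k" using s_next_pos[of i d] d less.prems 3 by auto
      thus ?thesis using True by simp
    next
      case False
      hence "0 < s (Suc i)" using IHi1 3 by simp
      thus ?thesis using nc[of "Suc i"] False 3 by simp
    qed
  qed
qed

lemma s_support_evens:
  assumes nc: "\<And>k. \<not> (0 < s k \<and> 0 < s (Suc k))"
  shows "\<exists>n. \<forall>k. 0 < s k \<longleftrightarrow> (even k \<and> k \<le> 2*n)"
proof -
  let ?A = "{k. 0 < s k}"
  have "?A \<subseteq> {..<N}"
  proof
    fix k assume "k \<in> ?A" thus "k \<in> {..<N}" using s_vanishes[of k] by (cases "N \<le> k") auto
  qed
  hence fin: "finite ?A" by (rule finite_subset) simp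
  define d where "d = Max ?A"
  have sd: "0 < s d" using Max_in[OF fin] s0 unfolding d_def by auto
  have dmax: "0 < s k \<Longrightarrow> k \<le> d" for k using Max_ge[OF fin] unfolding d_def by simp
  note even_iff = s_pos_iff_even_below[OF nc sd]
  obtain n where "d = 2*n" using even_iff[of d] sd by (auto elim: evenE)
  hence "0 < s k \<longleftrightarrow> (even k \<and> k \<le> 2*n)" for k
    using even_iff[of k] dmax[of k] by (cases "k \<le> d") auto
  thus ?thesis by blast
qed

lemma common_support_pair_sum:
  assumes "0 < r i" "0 < s i" "0 < r (Suc i)" "0 < s (Suc i)"
  shows "r i + r (Suc i) = 1 \<and> s i + s (Suc i) = 1"
proof -
  have "D i = 0" "D (Suc i) = 0" "E i = 0" "E (Suc i) = 0" using assms D_eq_0 E_eq_0 by auto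
  thus ?thesis using D_Suc[of i] E_Suc[of i] by simp
qed

lemma common_support_end_next:
  assumes r: "0 < r L" "r L < 1" and s: "0 < s L" "s L < 1"
    and no: "\<not> (0 < r (Suc L) \<and> 0 < s (Suc L))"
  shows "r (Suc L) = 0 \<and> s (Suc L) = 0"
proof -
  have DL: "D L = 0" "E L = 0" using r s D_eq_0 E_eq_0 by auto
  have rSL: "r (Suc L) = 0"
  proof (rule ccontr)
    assume "r (Suc L) \<noteq> 0" hence a: "0 < r (Suc L)" using r_nonneg[of "Suc L"] by simp
    hence "s (Suc L) = 0" using no s_nonneg[of "Suc L"] by simp
    moreover have "E (Suc L) = 0" using a E_eq_0 by simp
    ultimately show False using E_Suc[of L] DL s by simp
  qed
  moreover have "s (Suc L) = 0"
  proof (rule ccontr)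
    assume "s (Suc L) \<noteq> 0" hence "0 < s (Suc L)" using s_nonneg[of "Suc L"] by simp
    hence "D (Suc L) = 0" using D_eq_0 by simp
    thus False using D_Suc[of L] DL rSL r by simp
  qed
  ultimately show ?thesis ..
qed

lemma common_support_end:
  assumes L: "1 \<le> L" and r: "0 < r L" "r L < 1" and s: "0 < s L" "s L < 1"
    and next_zero: "r (Suc L) = 0" "s (Suc L) = 0" and i: "Suc L < i"
  shows "r i = 0 \<and> s i = 0"
proof -
  have DL: "D L = 0" "E L = 0" using r s D_eq_0 E_eq_0 by auto
  have "s i = 0"
  proof (rule ccontr)
    assume "s i \<noteq> 0" hence "0 < s i" using s_nonneg[of i] by simp
    hence "0 < s (Suc (Suc L))" using s_next_pos[of L i] s i next_zero by auto
    hence "D (Suc (Suc L)) = 0" by (rule D_eq_0)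
    hence "r L + r (Suc (Suc L)) = 2" using D_Suc[of L] D_Suc[of "Suc L"] DL next_zero by simp
    thus False using r r_le_1[of "Suc (Suc L)"] by simp
  qed
  moreover have "r i = 0"
  proof (rule ccontr)
    assume "r i \<noteq> 0" hence "0 < r i" using r_nonneg[of i] by simp
    hence "0 < r (Suc (Suc L))" using r_next_pos[of L i] r i next_zero by auto
    hence "E (Suc (Suc L)) = 0" by (rule E_eq_0)
    hence "s L + s (Suc (Suc L)) = 2" using E_Suc[of L] E_Suc[of "Suc L"] DL next_zero by simp
    thus False using s s_le_1[of "Suc (Suc L)"] by simp
  qed
  ultimately show ?thesis by simp
qed

lemma common_support_block:
  assumes "0 < r 0" "0 < r 1" "0 < s 1"
  shows "\<exists>L\<ge>1. (\<forall>i<L. r i + r (Suc i) = 1 \<and> s i + s (Suc i) = 1) \<and> (\<forall>i>L. r i = 0 \<and> s i = 0)"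
proof -
  let ?A = "{L. \<forall>i\<le>L. 0 < r i \<and> 0 < s i}"
  have "?A \<subseteq> {..<N}"
  proof
    fix L assume "L \<in> ?A" hence "0 < r L" by simp
    thus "L \<in> {..<N}" using r_vanishes[of L] by (cases "N \<le> L") auto
  qed
  hence fin: "finite ?A" by (rule finite_subset) simp
  have A1: "1 \<in> ?A"
  proof (intro CollectI allI impI)
    fix i :: nat assume "i \<le> 1" hence "i = 0 \<or> i = 1" by auto
    thus "0 < r i \<and> 0 < s i" using assms s0 by auto
  qed
  define L where "L = Max ?A"
  have "L \<in> ?A" using Max_in[OF fin] A1 unfolding L_def by blast
  hence LA: "\<And>i. i \<le> L \<Longrightarrow> 0 < r i \<and> 0 < s i" by blast
  have L1: "1 \<le> L" using Max_ge[OF fin A1] unfolding L_def by simp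
  have no: "\<not> (0 < r (Suc L) \<and> 0 < s (Suc L))"
  proof
    assume a: "0 < r (Suc L) \<and> 0 < s (Suc L)"
    have "Suc L \<in> ?A"
    proof (intro CollectI allI impI)
      fix i assume "i \<le> Suc L" hence "i \<le> L \<or> i = Suc L" by (simp add: le_Suc_eq)
      thus "0 < r i \<and> 0 < s i" using LA[of i] a by auto
    qed
    hence "Suc L \<le> L" using Max_ge[OF fin] unfolding L_def by blast
    thus False by simp
  qed
  have pairs: "r i + r (Suc i) = 1 \<and> s i + s (Suc i) = 1" if "i < L" for i
    using common_support_pair_sum LA[of i] LA[of "Suc i"] that by simp
  obtain L0 where L0: "L = Suc L0" using L1 by (cases L) auto
  have "0 < r L" "r L < 1" "0 < s L" "s L < 1"
    using pairs[of L0] LA[of L0] LA[of L] L0 by auto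
  note next_zero = common_support_end_next[OF this no]
  have "r i = 0 \<and> s i = 0" if "L < i" for i
    using common_support_end[OF L1 \<open>0 < r L\<close> \<open>r L < 1\<close> \<open>0 < s L\<close> \<open>s L < 1\<close>] next_zero that
    by (cases "i = Suc L") auto
  thus ?thesis using L1 pairs by blast
qed

end

locale scaled_equilibrium_means = scaled_equilibrium_pos +
  fixes x y b \<alpha> :: real and m :: nat
  assumes x_eq: "x = (\<Sum>k<N. r k)" and y_eq: "y = (\<Sum>k<N. s k)" and x_pos: "0 < x"
    and r_moment: "(\<Sum>k<N. real k * r k) = x * (real m + \<alpha>)"
    and \<alpha>_pos: "0 < \<alpha>" and \<alpha>_lt_1: "\<alpha> < 1" and m_ge_1: "1 \<le> m"
    and s_moment: "(\<Sum>k<N. real k * s k) = y * b" and b_pos: "0 < b" and b_lt_m: "b < real m"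
begin

lemma y_pos: "0 < y"
proof -
  have "0 < N" using s0 s_vanishes[of 0] by (cases N) auto
  hence "s 0 \<le> y" unfolding y_eq by (intro member_le_sum) (auto simp: s_nonneg)
  thus ?thesis using s0 by simp
qed

lemma mean_not_nat: "real m + \<alpha> \<noteq> real z"
proof
  assume "real m + \<alpha> = real z"
  hence "m < z" "z < m + 1" using \<alpha>_pos \<alpha>_lt_1 by linarith+
  thus False by simp
qed

lemma r_alternating_sums:
  assumes "\<forall>i<L. r i + r (Suc i) = 1" "\<forall>i>L. r i = 0"
  shows "(\<exists>n. L = 2*n \<and> (\<Sum>k<N. r k) = real n + r 0 \<and> (\<Sum>k<N. real k * r k) = real n * (real n + r 0))
    \<or> (\<exists>n. Suc L = 2*n \<and> (\<Sum>k<N. r k) = real n \<and> (\<Sum>k<N. real k * r k) = real n ^ 2 - real n * r 0)"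
  using sums_alternating[of L r N] assms r_vanishes by blast

lemma s_alternating_sums:
  assumes "\<forall>i<L. s i + s (Suc i) = 1" "\<forall>i>L. s i = 0"
  shows "(\<exists>n. L = 2*n \<and> (\<Sum>k<N. s k) = real n + s 0 \<and> (\<Sum>k<N. real k * s k) = real n * (real n + s 0))
    \<or> (\<exists>n. Suc L = 2*n \<and> (\<Sum>k<N. s k) = real n \<and> (\<Sum>k<N. real k * s k) = real n ^ 2 - real n * s 0)"
  using sums_alternating[of L s N] assms s_vanishes by blast

lemma mass_identity: "x * (real m + \<alpha>) + y * b + p1 * x + p2 * y = 2 * x * y"
  using payoff_mass_identity x_eq y_eq r_moment s_moment by simp

text \<open>With \<open>r 0 \<in> {0, 1}\<close>, an alternating \<open>r\<close> has an integral mean, never \<open>m + \<alpha>\<close>.\<close>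
lemma alternating_r_impossible:
  assumes alt: "\<forall>i<L. r i + r (Suc i) = 1" "\<forall>i>L. r i = 0" and r0: "r 0 = 0 \<or> r 0 = 1"
  shows False
  using r_alternating_sums[OF alt]
proof (elim disjE exE conjE)
  fix n assume "(\<Sum>k<N. r k) = real n + r 0" "(\<Sum>k<N. real k * r k) = real n * (real n + r 0)"
  hence "x * (real m + \<alpha>) = x * real n" using x_eq r_moment by (simp add: algebra_simps)
  thus False using x_pos mean_not_nat by simp
next
  fix n assume "(\<Sum>k<N. r k) = real n" "(\<Sum>k<N. real k * r k) = real n ^ 2 - real n * r 0"
  hence "x = real n" "x * (real m + \<alpha>) = x * (real n - r 0)"
    using x_eq r_moment by (auto simp: power2_eq_square algebra_simps)
  hence "real m + \<alpha> = real n - r 0" "0 < n" using x_pos by auto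
  with r0 show False using mean_not_nat[of n] mean_not_nat[of "n - 1"] by (auto simp: of_nat_diff)
qed

lemma common_support_impossible:
  assumes "0 < r j" "0 < s j" "0 < r (Suc j)" "0 < s (Suc j)"
  shows False
proof -
  have start: "0 < r 0" "0 < r 1" "0 < s 1" using common_support_start[of j] assms by auto
  then obtain L where L1: "1 \<le> L" and pairs: "\<forall>i<L. r i + r (Suc i) = 1 \<and> s i + s (Suc i) = 1"
    and beyond: "\<forall>i>L. r i = 0 \<and> s i = 0" using common_support_block by blast
  have r01: "r 0 + r 1 = 1" "s 0 + s 1 = 1" using pairs L1 by auto
  have ar: "\<forall>i<L. r i + r (Suc i) = 1" "\<forall>i>L. r i = 0"
    and as: "\<forall>i<L. s i + s (Suc i) = 1" "\<forall>i>L. s i = 0" using pairs beyond by auto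
  note Hs = s_alternating_sums[OF as]
  from r_alternating_sums[OF ar] show False
  proof (elim disjE exE conjE)
    fix n assume "(\<Sum>k<N. r k) = real n + r 0" "(\<Sum>k<N. real k * r k) = real n * (real n + r 0)"
    hence "x * (real m + \<alpha>) = x * real n" using x_eq r_moment by (simp add: algebra_simps)
    thus False using x_pos mean_not_nat by simp
  next
    fix n assume n: "Suc L = 2*n" "(\<Sum>k<N. r k) = real n" "(\<Sum>k<N. real k * r k) = real n ^ 2 - real n * r 0"
    have "\<not> (\<exists>n'. L = 2*n')" using n(1) by presburger
    with Hs obtain n' where "Suc L = 2*n'" "(\<Sum>k<N. s k) = real n'"
        "(\<Sum>k<N. real k * s k) = real n' ^ 2 - real n' * s 0" by blast
    with n have "x = real n" "y = real n" "x * (real m + \<alpha>) = x * (real n - r 0)"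
        "y * b = y * (real n - s 0)"
      using x_eq y_eq r_moment s_moment by (auto simp: power2_eq_square algebra_simps)
    hence m\<alpha>: "real m + \<alpha> = real n - r 0" and b: "b = real n - s 0" using x_pos y_pos by auto
    have "real m < real n" "real n < real m + 2"
      using m\<alpha> r01 start \<alpha>_pos \<alpha>_lt_1 r_nonneg[of 1] by linarith+
    hence "n = m + 1" by simp
    thus False using b b_lt_m r01 start by simp
  qed
qed

lemma s_no_adjacent_support: "\<not> (0 < s j \<and> 0 < s (Suc j))"
proof
  assume sj: "0 < s j \<and> 0 < s (Suc j)"
  hence "D j = 0" "D (Suc j) = 0" using D_eq_0 by auto
  hence rsum: "r j + r (Suc j) = 1" using D_Suc[of j] by simp
  consider "0 < r j" "0 < r (Suc j)" | "r j = 0" | "r (Suc j) = 0"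
    using r_nonneg[of j] r_nonneg[of "Suc j"] by force
  thus False
  proof cases
    case 1
    thus False using common_support_impossible sj by blast
  next
    case 2
    have pt: "\<forall>i \<le> Suc j. r i = parity (Suc j) i"
      using r_alternates_below[of j] sj 2 rsum unfolding parity_def by auto
    obtain L where "\<forall>i<L. r i + r (Suc i) = 1" "\<forall>i>L. r i = 0"
      using r_alternating_then_zero[OF pt, of "Suc j"] sj by auto
    moreover have "r 0 = 0 \<or> r 0 = 1" using pt unfolding parity_def by auto
    ultimately show False by (rule alternating_r_impossible)
  next
    case 3
    hence rj: "r j = 1" using rsum by simp
    show False
    proof (cases j)
      case 0
      have pt: "\<forall>i \<le> 1. r i = parity 0 i" using rj 3 0 unfolding parity_def by (auto simp: le_Suc_eq)
      obtain L where "\<forall>i<L. r i + r (Suc i) = 1" "\<forall>i>L. r i = 0"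
        using r_alternating_then_zero[OF pt, of 0] s0 by auto
      moreover have "r 0 = 0 \<or> r 0 = 1" using rj 0 by simp
      ultimately show False by (rule alternating_r_impossible)
    next
      case (Suc j0)
      have sj0: "0 < s j0"
      proof (rule ccontr)
        assume "\<not> 0 < s j0" hence "s j0 = 0" using s_nonneg[of j0] by simp
        moreover have "E j = 0" using rj E_eq_0 by simp
        ultimately show False
          using E_Suc[of j0] E_Suc[of j] E_nonpos[of j0] E_nonpos[of "Suc j"] sj Suc by simp
      qed
      hence "D j0 = 0" by (rule D_eq_0)
      hence "r j0 = 0" using D_Suc[of j0] \<open>D j = 0\<close> rj Suc by simp
      hence pt: "\<forall>i \<le> j. r i = parity j i"
        using r_alternates_below[of j0] sj0 rj Suc unfolding parity_def by auto
      obtain L where "\<forall>i<L. r i + r (Suc i) = 1" "\<forall>i>L. r i = 0"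
        using r_alternating_then_zero[OF pt, of j] sj by auto
      moreover have "r 0 = 0 \<or> r 0 = 1" using pt unfolding parity_def by auto
      ultimately show False by (rule alternating_r_impossible)
    qed
  qed
qed

lemma s_support_evens_upto:
  obtains n where "\<And>k. 0 < s k \<longleftrightarrow> even k \<and> k \<le> 2*n"
  using s_support_evens s_no_adjacent_support by blast

context
  fixes n :: nat
  assumes s_pos_iff: "\<And>k. 0 < s k \<longleftrightarrow> even k \<and> k \<le> 2*n"
begin

lemma s_eq_0_off_support: "odd k \<or> 2*n < k \<Longrightarrow> s k = 0"
  using s_pos_iff[of k] s_nonneg[of k] by auto

lemma n_ge_1: "1 \<le> n"
proof (rule ccontr)
  assume "\<not> 1 \<le> n"
  hence "real k * s k = 0" for k using s_eq_0_off_support[of k] by (cases k) auto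
  hence "(\<Sum>k<N. real k * s k) = 0" by (simp only: sum.neutral_const)
  thus False using s_moment y_pos b_pos by simp
qed

lemma r_eq_0_above: "2*n + 1 < k \<Longrightarrow> r k = 0"
proof (rule ccontr)
  assume k: "2*n + 1 < k" and "r k \<noteq> 0"
  hence "E k = 0" using r_nonneg[of k] E_eq_0 by simp
  moreover obtain k' where "k = Suc k'" "2*n < k'" using k by (cases k) auto
  ultimately show False using E_Suc[of k'] E_nonpos[of k'] s_eq_0_off_support by simp
qed

lemma s_even_eq_1:
  assumes i: "1 \<le> i" "i \<le> n"
  shows "s (2*i) = 1 \<or> (i = n \<and> (\<forall>k\<ge>2*n. r k = 0))"
proof -
  obtain i0 where i0: "2*i = Suc i0" using i by (cases i) auto
  have "odd i0" using i0 by presburger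
  hence so: "s i0 = 0" "s (Suc (2*i)) = 0" using s_eq_0_off_support by auto
  show ?thesis
  proof (cases "0 < r (2*i)")
    case True
    hence "E (2*i) = 0" by (rule E_eq_0)
    hence "s (2*i) \<ge> 1" using E_Suc[of i0] E_nonpos[of i0] so i0 by simp
    thus ?thesis using s_le_1[of "2*i"] i by simp
  next
    case False
    hence r2: "r (2*i) = 0" using r_nonneg[of "2*i"] by simp
    show ?thesis
    proof (cases "0 < r (Suc (2*i))")
      case True
      hence "E (Suc (2*i)) = 0" by (rule E_eq_0)
      hence "s (2*i) \<ge> 1" using E_Suc[of "2*i"] E_nonpos[of "2*i"] so by simp
      thus ?thesis using s_le_1[of "2*i"] i by simp
    next
      case False
      hence "r (Suc (2*i)) = 0" using r_nonneg[of "Suc (2*i)"] by simp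
      hence za: "\<forall>k>2*i. r k = 0" using r_zero_after_two_zeros[OF r2] by blast
      have "i = n"
      proof (rule ccontr)
        assume "i \<noteq> n"
        hence "0 < s (Suc (Suc (2*i)))" using i s_pos_iff[of "Suc (Suc (2*i))"] by simp
        hence "D (Suc (Suc (2*i))) = 0" by (rule D_eq_0)
        thus False using D_Suc[of "Suc (2*i)"] D_nonpos[of "Suc (2*i)"] za by simp
      qed
      moreover have "\<forall>k\<ge>2*n. r k = 0"
        using za r2 \<open>i = n\<close> by (metis le_neq_implies_less)
      ultimately show ?thesis by simp
    qed
  qed
qed

lemma s_top: "0 < s (2*n)" "s (2*n) \<le> 1"
  using s_pos_iff[of "2*n"] s_le_1[of "2*n"] n_ge_1 by auto

lemma s_sums:
  "(\<Sum>k<N. s k) = s 0 + real n - 1 + s (2*n)"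
  "(\<Sum>k<N. real k * s k) = real n * (real n - 1) + 2 * real n * s (2*n)"
proof -
  have partial: "(\<Sum>k<2*i+1. s k) = s 0 + real i \<and> (\<Sum>k<2*i+1. real k * s k) = real i * (real i + 1)"
    if "i < n" for i
    using that
  proof (induction i)
    case (Suc i)
    have e: "2 * Suc i + 1 = Suc (Suc (2*i+1))" by simp
    have "s (2*i+1) = 0" using s_eq_0_off_support by simp
    moreover have "s (Suc (2*i+1)) = 1" using s_even_eq_1[of "Suc i"] Suc.prems by auto
    ultimately show ?case using Suc unfolding e by (simp add: algebra_simps)
  qed simp
  obtain n' where n': "n = Suc n'" using n_ge_1 by (cases n) auto
  have e: "2*n + 1 = Suc (Suc (2*n'+1))" "Suc (2*n'+1) = 2*n" using n' by simp_all
  have "(\<Sum>k<N. s k) = (\<Sum>k<2*n+1. s k)" "(\<Sum>k<N. real k * s k) = (\<Sum>k<2*n+1. real k * s k)"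
    using sum_lessThan_eq_zero_tail[of "2*n+1" s N]
      sum_lessThan_eq_zero_tail[of "2*n+1" "\<lambda>k. real k * s k" N] s_eq_0_off_support s_vanishes
    by simp_all
  moreover have "s (2*n'+1) = 0" using s_eq_0_off_support by simp
  ultimately show "(\<Sum>k<N. s k) = s 0 + real n - 1 + s (2*n)"
    "(\<Sum>k<N. real k * s k) = real n * (real n - 1) + 2 * real n * s (2*n)"
    using partial[of n'] n' unfolding e by (simp_all add: algebra_simps)
qed

lemma r_sum_bounds:
  "(\<Sum>i<2*n+2. r i) = x" "2*x - 2*n - 2 - p2 \<le> 0"
proof -
  show xsum: "(\<Sum>i<2*n+2. r i) = x"
    unfolding x_eq using sum_lessThan_eq_zero_tail[of "2*n+2" r N] r_eq_0_above r_vanishes by simp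
  show "2*x - 2*n - 2 - p2 \<le> 0"
    using D_nonpos[of "2*n+2"] xsum r_eq_0_above[of "2*n+2"] unfolding D_def score_def by simp
qed

lemma x_eq_if_r_vanishes_from_top:
  assumes "\<forall>k\<ge>2*n. r k = 0"
  shows "x = real n + p2 / 2"
proof -
  have "(\<Sum>i<2*n. r i) = x"
    unfolding x_eq using sum_lessThan_eq_zero_tail[of "2*n" r N] assms r_vanishes by simp
  moreover have "D (2*n) = 0" using D_eq_0 s_top by simp
  ultimately show ?thesis using assms unfolding D_def score_def by simp
qed

lemma s0_eq_1_if_r0_pos:
  assumes r0: "0 < r 0"
  shows "s 0 = 1"
proof (cases "0 < r 1")
  case True
  thus ?thesis using E_eq_0[OF True] E_Suc[of 0] E_eq_0[OF r0] s_eq_0_off_support[of 1] by simp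
next
  case False
  have "\<exists>k>0. 0 < r k"
  proof (rule ccontr)
    assume none: "\<not> (\<exists>k>0. 0 < r k)"
    have "r k = 0" if "0 < k" for k
      using none r_nonneg[of k] that by (meson not_less order.antisym)
    hence "real k * r k = 0" for k by (cases "k = 0") simp_all
    hence "(\<Sum>k<N. real k * r k) = 0" by (simp only: sum.neutral_const)
    thus False using r_moment x_pos \<alpha>_pos by simp
  qed
  then obtain k where "0 < k" "0 < r k" by blast
  hence "0 < r 2" using r_next_pos[of 0 k] r0 False by (simp add: numeral_2_eq_2)
  hence "E 2 = 0" by (rule E_eq_0)
  moreover have "s 1 = 0" "s 2 \<le> 1" "s 0 \<le> 1"
    using s_eq_0_off_support[of 1] s_le_1[of 2] s0_le_1[OF r0] by simp_all
  ultimately show ?thesis using E_Suc[of 0] E_Suc[of 1] E_eq_0[OF r0] by (simp add: numeral_2_eq_2)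
qed

lemma r0_eq_0: "r 0 = 0"
proof (rule ccontr)
  assume "r 0 \<noteq> 0"
  hence r0: "0 < r 0" using r_nonneg[of 0] by simp
  have p: "p1 = 1" "p2 = r 0" "s 0 = 1"
    using E_eq_0[OF r0] E_0 p2_eq_r0 s0_eq_1_if_r0_pos[OF r0] by simp_all
  have y: "y = real n + s (2*n)" using s_sums y_eq p by simp
  show False
  proof (cases "s (2*n) = 1")
    case True
    have "y * b = y * real n" using s_moment s_sums y True by (simp add: algebra_simps)
    hence b: "b = real n" using y_pos by simp
    have "x * (real m + \<alpha>) - x * (real n + 1) = real n * x - (real n + 1) * (real n + r 0)"
      using mass_identity p y True b by (simp add: algebra_simps)
    moreover have "real n * x \<le> real n * (real n + 1 + r 0 / 2)"
      using r_sum_bounds(2) p by (intro mult_left_mono) auto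
    moreover have "real n * (real n + 1 + r 0 / 2) - (real n + 1) * (real n + r 0) = - (real n * r 0 / 2) - r 0"
      by (simp add: algebra_simps)
    moreover have "0 \<le> real n * r 0" using r0 by simp
    ultimately have "x * (real m + \<alpha>) \<le> x * (real n + 1)" using r0 by linarith
    hence "real m + \<alpha> \<le> real n + 1" using x_pos by simp
    hence "m < n + 1" using \<alpha>_pos by linarith
    thus False using b b_lt_m by simp
  next
    case False
    hence "\<forall>k\<ge>2*n. r k = 0" using s_even_eq_1[of n] n_ge_1 by auto
    hence x: "x = real n + r 0 / 2" using x_eq_if_r_vanishes_from_top p by simp
    have yb: "y * b = real n * (real n - 1) + 2 * real n * s (2*n)" using s_moment s_sums by simp
    hence "x * (real m + \<alpha>) = real n ^ 2 - r 0 / 2"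
      using mass_identity p x y by (simp add: power2_eq_square algebra_simps)
    moreover have "x * real n = real n ^ 2 + real n * r 0 / 2"
      using x by (simp add: power2_eq_square algebra_simps)
    moreover have "0 \<le> real n * r 0" using r0 by simp
    ultimately have "x * (real m + \<alpha>) \<le> x * real n" using r0 by linarith
    hence "real m + \<alpha> \<le> real n" using x_pos by simp
    hence mn: "m < n" using \<alpha>_pos by linarith
    have "y * (real n - 1) = real n * (real n - 1) + real n * s (2*n) - s (2*n)"
      using y by (simp add: algebra_simps)
    moreover have "0 \<le> real n * s (2*n)" using s_top by simp
    ultimately have "y * b \<ge> y * (real n - 1)" using yb s_top by linarith
    hence "b \<ge> real n - 1" using y_pos by simp
    thus False using mn b_lt_m by linarith
  qed
qed

lemma p2_eq_0: "p2 = 0"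
  using p2_eq_r0 r0_eq_0 by simp

lemma p1_eq: "p1 = 2 * s 0 - 1"
proof -
  have s2: "0 < s 2" using s_pos_iff[of 2] n_ge_1 by simp
  have s1: "s 1 = 0" using s_eq_0_off_support by simp
  have E1: "E 1 = 2 * s 0 - 1 - p1" using E_Suc[of 0] E_0 s1 by simp
  show ?thesis
  proof (cases "0 < r 1")
    case True thus ?thesis using E_eq_0[OF True] E1 by simp
  next
    case False
    have "D 2 = 0" using s2 by (rule D_eq_0)
    hence "0 < r 2" using D_Suc[of 1] D_nonpos[of 1] r_nonneg[of 1] False by (simp add: numeral_2_eq_2)
    hence "E 2 = 0" by (rule E_eq_0)
    hence "s 2 = 1" using E_Suc[of 1] E_nonpos[of 1] s1 s_le_1[of 2] by (simp add: numeral_2_eq_2)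
    hence "E 1 = 0" using \<open>E 2 = 0\<close> E_Suc[of 1] s1 by (simp add: numeral_2_eq_2)
    thus ?thesis using E1 by simp
  qed
qed

lemma x_mean_eq:
  "x * (real m + \<alpha>) = 2 * x * (real n - 1 + s (2*n)) + x - real n * (real n - 1) - 2 * real n * s (2*n)"
proof -
  have y: "y = s 0 + real n - 1 + s (2*n)" using y_eq s_sums by simp
  have "x * (real m + \<alpha>) = 2*x*y - y*b - p1*x - p2*y" using mass_identity by linarith
  also have "\<dots> = 2*x*y - (real n * (real n - 1) + 2 * real n * s (2*n)) - (2 * s 0 - 1) * x"
    using s_moment s_sums p1_eq p2_eq_0 by simp
  also have "\<dots> = 2 * x * (real n - 1 + s (2*n)) + x - real n * (real n - 1) - 2 * real n * s (2*n)"
    by (simp only: y) (simp add: algebra_simps)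
  finally show ?thesis .
qed

lemma s_top_eq_1: "s (2*n) = 1"
proof (rule ccontr)
  assume "s (2*n) \<noteq> 1"
  hence "\<forall>k\<ge>2*n. r k = 0" using s_even_eq_1[of n] n_ge_1 by auto
  hence "x = real n" using x_eq_if_r_vanishes_from_top p2_eq_0 by simp
  hence "x * (real m + \<alpha>) = x * real n" using x_mean_eq by (simp add: algebra_simps)
  hence "real m + \<alpha> = real n" using x_pos by simp
  thus False using mean_not_nat by blast
qed

lemma x_mean_eq_top: "x * (real m + \<alpha>) = (2 * real n + 1) * x - real n * (real n + 1)"
  using x_mean_eq s_top_eq_1 by (simp add: algebra_simps)

lemma n_eq_m: "n = m"
proof -
  have "x \<le> real n + 1" using r_sum_bounds(2) p2_eq_0 by simp
  hence "real n * x \<le> real n * (real n + 1)" by (simp add: mult_left_mono)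
  hence "x * (real m + \<alpha>) \<le> x * (real n + 1)" using x_mean_eq_top by (simp add: algebra_simps)
  hence "real m + \<alpha> \<le> real n + 1" using x_pos by simp
  hence "m < n + 1" using \<alpha>_pos by linarith
  have "(\<Sum>i<Suc (2*n). r i) \<le> x" using sum_r_lessThan_le[of "Suc (2*n)"] x_eq by simp
  moreover have "D (2*n) = 0" using D_eq_0 s_top by simp
  ultimately have "real n \<le> x" using p2_eq_0 r_nonneg[of "2*n"] unfolding D_def score_def by simp
  hence "(real n + 1) * real n \<le> (real n + 1) * x" by (simp add: mult_left_mono)
  hence "x * real n \<le> x * (real m + \<alpha>)" using x_mean_eq_top by (simp add: algebra_simps)
  hence "real n \<le> real m + \<alpha>" using x_pos by simp
  hence "n < m + 1" using \<alpha>_lt_1 by linarith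
  with \<open>m < n + 1\<close> show ?thesis by simp
qed

lemma x_between: "real m < x" "x < real m + 1" and x_\<alpha>: "x * \<alpha> = (real m + 1) * (x - real m)"
proof -
  show x\<alpha>: "x * \<alpha> = (real m + 1) * (x - real m)" using x_mean_eq_top n_eq_m by (simp add: algebra_simps)
  have "0 < x * \<alpha>" using x_pos \<alpha>_pos by simp
  hence "0 < (real m + 1) * (x - real m)" using x\<alpha> by simp
  thus "real m < x" by (simp add: zero_less_mult_iff)
  have "x * (1 - \<alpha>) = real m * (real m + 1 - x)" using x\<alpha> by (simp add: algebra_simps)
  moreover have "0 < x * (1 - \<alpha>)" using x_pos \<alpha>_lt_1 by simp
  ultimately have "0 < real m * (real m + 1 - x)" by simp
  thus "x < real m + 1" using m_ge_1 by (simp add: zero_less_mult_iff)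
qed

end

lemma equilibrium_shape:
  shows "r 0 = 0" and "p2 = 0" and "p1 = 2*y - 2*real m - 1"
    and "s 0 = y - real m" and "\<And>k. 0 < k \<Longrightarrow> s k = (if even k \<and> k \<le> 2*m then 1 else 0)"
    and "\<And>k. 2*m + 1 < k \<Longrightarrow> r k = 0"
    and "real m < x" and "x < real m + 1"
    and "y * b = real m * (real m + 1)" and "x * \<alpha> = (real m + 1) * (x - real m)"
proof -
  obtain n where n: "\<And>k. 0 < s k \<longleftrightarrow> even k \<and> k \<le> 2*n" using s_support_evens_upto by blast
  note nm = n_eq_m[OF n]
  have s0: "s 0 = y - real m" using y_eq s_sums(1)[OF n] s_top_eq_1[OF n] nm by simp
  show "r 0 = 0" "p2 = 0" using r0_eq_0[OF n] p2_eq_0[OF n] .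
  show "s 0 = y - real m" by (rule s0)
  show "p1 = 2*y - 2*real m - 1" using p1_eq[OF n] s0 by simp
  show "2*m + 1 < k \<Longrightarrow> r k = 0" for k using r_eq_0_above[OF n] nm by simp
  show "real m < x" "x < real m + 1" "x * \<alpha> = (real m + 1) * (x - real m)"
    using x_between[OF n] x_\<alpha>[OF n] by simp_all
  show "y * b = real m * (real m + 1)"
    using s_moment s_sums(2)[OF n] s_top_eq_1[OF n] nm by (simp add: algebra_simps)
  show "s k = (if even k \<and> k \<le> 2*m then 1 else 0)" if "0 < k" for k
  proof (cases "even k \<and> k \<le> 2*m")
    case True
    then obtain i where i: "k = 2*i" by (auto elim: evenE)
    hence "1 \<le> i" "i \<le> n" using that True nm by auto
    thus ?thesis using i using s_even_eq_1[OF n, of i] s_top_eq_1[OF n] True by (cases "i = n") auto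
  next
    case False
    thus ?thesis using s_eq_0_off_support[OF n, of k] nm by auto
  qed
qed

end

section \<open>The vertices of the admissible scaled densities of player 1\<close>

lemma bid_cases:
  fixes k n :: nat
  obtains "k = 0" | "2*n+1 < k" | "k = 2*n+1" | i where "k = 2*i" "1 \<le> i" "i \<le> n"
    | i where "k = 2*i+1" "i < n"
proof -
  have "k = 0 \<or> 2*n+1 < k \<or> k = 2*n+1 \<or> (\<exists>i. k = 2*i \<and> 1 \<le> i \<and> i \<le> n) \<or> (\<exists>i. k = 2*i+1 \<and> i < n)"
  proof (cases "even k")
    case True
    then obtain i where "k = 2*i" by (auto elim: evenE)
    thus ?thesis by (cases "i = 0"; cases "i \<le> n") auto
  next
    case False
    then obtain i where "k = 2*i+1" by (auto elim: oddE)
    thus ?thesis by (cases "i < n"; cases "i = n") auto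
  qed
  thus ?thesis using that by blast
qed

text \<open>With \<open>h = min (x - n) (n + 1 - x)\<close>, the scaled densities of mass \<open>x\<close> on \<open>{1, ..., 2n+1}\<close> whose
  score is nonpositive and vanishes at the even bids up to \<open>2n\<close> are exactly the mixtures of the
  \<open>vertex n x h j\<close>, \<open>1 \<le> j \<le> n + 1\<close>: for \<open>j \<le> n\<close> the score of \<open>vertex n x h j\<close> below \<open>2n+1\<close> is \<open>-h\<close>
  at \<open>2j - 1\<close> and zero elsewhere, and that of \<open>vertex n x h (n+1)\<close> is zero there.\<close>
definition vertex :: "nat \<Rightarrow> real \<Rightarrow> real \<Rightarrow> nat \<Rightarrow> nat \<Rightarrow> real" where
 "vertex n x h j k = (if k = 0 then 0
    else if k = 2*n+1 then (x - real n) - h * of_bool (j \<le> n)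
    else if k \<le> 2*n then (if odd k then 1 - h * (of_bool (j \<le> (k+1) div 2) + of_bool (j \<le> (k-1) div 2))
                       else 2*h* of_bool (j \<le> k div 2))
    else 0)"

lemma vertex_even: "1 \<le> i \<Longrightarrow> i \<le> n \<Longrightarrow> vertex n x h j (2*i) = 2*h* of_bool (j \<le> i)"
  unfolding vertex_def by auto

lemma vertex_odd: "i < n \<Longrightarrow> vertex n x h j (2*i+1) = 1 - h * (of_bool (j \<le> Suc i) + of_bool (j \<le> i))"
  unfolding vertex_def by auto

lemma vertex_top: "vertex n x h j (2*n+1) = (x - real n) - h * of_bool (j \<le> n)"
  unfolding vertex_def by auto

lemma vertex_big: "2*n+1 < k \<Longrightarrow> vertex n x h j k = 0"
  unfolding vertex_def by auto

lemma vertex_zero: "vertex n x h j 0 = 0" unfolding vertex_def by simp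

lemma vertex_prefix: "1 \<le> j \<Longrightarrow> i \<le> n \<Longrightarrow> (\<Sum>k<2*i. vertex n x h j k) = real i - h * of_bool (j \<le> i)"
proof (induction i)
  case 0 thus ?case by (simp add: of_bool_def)
next
  case (Suc i)
  have e: "2 * Suc i = Suc (Suc (2*i))" by simp
  have a: "vertex n x h j (2*i) = 2*h* of_bool (j \<le> i)"
    using vertex_even[of i n x h j] vertex_zero Suc.prems by (cases "i = 0") (auto simp: of_bool_def)
  have b: "vertex n x h j (Suc (2*i)) = 1 - h * (of_bool (j \<le> Suc i) + of_bool (j \<le> i))"
    using vertex_odd[of i n x h j] Suc.prems by simp
  show ?case unfolding e using Suc a b by (simp add: algebra_simps)
qed

lemma sum_vertex:
  assumes "1 \<le> j" "1 \<le> n"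
  shows "(\<Sum>k<2*n+1. vertex n x h j k) = real n + h * of_bool (j \<le> n)"
    and "(\<Sum>k<2*n+2. vertex n x h j k) = x"
proof -
  show top: "(\<Sum>k<2*n+1. vertex n x h j k) = real n + h * of_bool (j \<le> n)"
    using vertex_prefix[of j n n x h] vertex_even[of n n x h j] assms by simp
  show "(\<Sum>k<2*n+2. vertex n x h j k) = x"
    using top vertex_top[of n x h j] by simp
qed

lemma score_vertex:
  assumes j: "1 \<le> j" and n1: "1 \<le> n" and hx: "h \<le> real n + 1 - x" "0 \<le> h" "x < real n + 1"
  shows "score (vertex n x h j) k \<le> 0" and "i \<le> n \<Longrightarrow> score (vertex n x h j) (2*i) = 0"
proof -
  let ?f = "vertex n x h j"
  have pre: "i \<le> n \<Longrightarrow> (\<Sum>k<2*i. ?f k) = real i - h * of_bool (j \<le> i)" for i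
    using vertex_prefix j by simp
  show ev: "score ?f (2*i) = 0" if "i \<le> n" for i
    using that pre[of i] vertex_even[of i n x h j] vertex_zero j
    by (cases "i = 0") (auto simp: score_def of_bool_def)
  show "score ?f k \<le> 0"
  proof (cases rule: bid_cases[where k=k and n=n])
    case 1 thus ?thesis by (simp add: score_def vertex_zero)
  next
    case 2
    have "(\<Sum>i<k. ?f i) = (\<Sum>i<2*n+2. ?f i)"
      using 2 vertex_big by (intro sum_lessThan_eq_zero_tail) auto
    thus ?thesis using sum_vertex(2)[OF j n1] vertex_big[OF 2] 2 hx unfolding score_def by simp
  next
    case 3
    have "score ?f k = (\<Sum>k<2*n+1. ?f k) + (\<Sum>k<2*n+2. ?f k) - real (2*n+1)"
      using 3 unfolding score_def by simp
    also have "\<dots> = real n + h * of_bool (j \<le> n) + x - 2 * real n - 1"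
      using sum_vertex[OF j n1, of x h] by simp
    finally show ?thesis using hx by (simp add: of_bool_def)
  next
    case (4 i) thus ?thesis using ev by simp
  next
    case (5 i)
    have "score ?f k = 2 * (\<Sum>k<2*i. ?f k) + 2 * ?f (2*i) + ?f (2*i+1) - real (2*i+1)"
      using 5 unfolding score_def by simp
    also have "\<dots> = h * of_bool (j \<le> i) - h * of_bool (j \<le> Suc i)"
      using pre[of i] vertex_odd[OF \<open>i < n\<close>, of x h j] vertex_even[of i n x h j] vertex_zero 5 j
      by (cases "i = 0") (auto simp: of_bool_def algebra_simps)
    finally show ?thesis using hx by (simp add: of_bool_def)
  qed
qed

definition vertex_weight :: "(nat \<Rightarrow> real) \<Rightarrow> nat \<Rightarrow> real \<Rightarrow> nat \<Rightarrow> real" where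
  "vertex_weight r n h j =
     (if j \<le> n then - score r (2*j-1) / h else 1 - (\<Sum>l\<in>{1..n}. - score r (2*l-1) / h))"

context
  fixes r :: "nat \<Rightarrow> real" and n :: nat and x h :: real
  assumes r_0: "r 0 = 0" and r_vanishes_above: "\<And>k. 2*n+1 < k \<Longrightarrow> r k = 0"
    and r_sum: "(\<Sum>k<2*n+2. r k) = x"
    and score_even: "\<And>i. i \<le> n \<Longrightarrow> score r (2*i) = 0" and score_nonpos: "\<And>k. score r k \<le> 0"
    and r_nonneg: "\<And>k. 0 \<le> r k" and h_pos: "0 < h" and h_cases: "h = x - real n \<or> h = real n + 1 - x"
begin

lemma r_even_eq: "i \<le> n \<Longrightarrow> r (2*i) = real (2*i) - 2 * (\<Sum>k<2*i. r k)"
  using score_even unfolding score_def by force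

lemma score_odd_eq: "i \<le> n \<Longrightarrow> score r (2*i+1) = (\<Sum>k<2 * Suc i. r k) - (\<Sum>k<2*i. r k) - 1"
  using r_even_eq[of i] unfolding score_def by simp

lemma sum_vertex_weight_upto:
  "i \<le> n \<Longrightarrow> (\<Sum>l\<in>{1..i}. vertex_weight r n h l) = (real i - (\<Sum>k<2*i. r k)) / h"
proof (induction i)
  case (Suc i)
  have "vertex_weight r n h (Suc i) = (1 + (\<Sum>k<2*i. r k) - (\<Sum>k<2 * Suc i. r k)) / h"
    using score_odd_eq[of i] Suc.prems unfolding vertex_weight_def by simp
  thus ?case using Suc by (simp add: diff_divide_distrib add_divide_distrib)
qed simp

lemma sum_vertex_weight: "(\<Sum>j\<in>{1..Suc n}. vertex_weight r n h j) = 1"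
  using sum_vertex_weight_upto[of n] unfolding vertex_weight_def by simp

lemma vertex_weight_nonneg: "0 \<le> vertex_weight r n h j"
proof (cases "j \<le> n")
  case True
  thus ?thesis using score_nonpos[of "2*j-1"] h_pos unfolding vertex_weight_def
    by (simp add: divide_nonpos_pos)
next
  case False
  have "r (2*n+1) = x + (\<Sum>k<2*n. r k) - 2 * real n"
    using r_sum r_even_eq[of n] by simp
  moreover have "score r (2*n+1) = x - (\<Sum>k<2*n. r k) - 1"
    using score_odd_eq[of n] r_sum by simp
  ultimately have "real n - (\<Sum>k<2*n. r k) \<le> h"
    using h_cases r_nonneg[of "2*n+1"] score_nonpos[of "2*n+1"] by auto
  hence "(real n - (\<Sum>k<2*n. r k)) / h \<le> 1" using h_pos by simp
  moreover have "vertex_weight r n h j = 1 - (\<Sum>l\<in>{1..n}. vertex_weight r n h l)"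
    using False unfolding vertex_weight_def by simp
  ultimately show ?thesis using sum_vertex_weight_upto[of n] by simp
qed

lemma sum_vertex_weight_below:
  assumes "i \<le> n"
  shows "(\<Sum>j\<in>{1..Suc n}. vertex_weight r n h j * of_bool (j \<le> i)) = (real i - (\<Sum>k<2*i. r k)) / h"
proof -
  have "(\<Sum>j\<in>{1..Suc n}. vertex_weight r n h j * of_bool (j \<le> i))
      = (\<Sum>j\<in>{1..Suc n}. if j \<le> i then vertex_weight r n h j else 0)"
    by (intro sum.cong) (auto simp: of_bool_def)
  also have "\<dots> = (\<Sum>j\<in>{j\<in>{1..Suc n}. j \<le> i}. vertex_weight r n h j)"
    by (rule sum.inter_filter[symmetric]) simp
  also have "{j\<in>{1..Suc n}. j \<le> i} = {1..i}" using assms by auto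
  finally show ?thesis using sum_vertex_weight_upto[OF assms] by simp
qed

lemma vertex_decomposition: "r k = (\<Sum>j\<in>{1..Suc n}. vertex_weight r n h j * vertex n x h j k)"
proof -
  let ?w = "vertex_weight r n h"
  have expand: "(\<Sum>j\<in>{1..Suc n}. ?w j * vertex n x h j k)
      = c - d * (real i - (\<Sum>k<2*i. r k)) - e * (real i' - (\<Sum>k<2*i'. r k))"
    if v: "\<And>j. vertex n x h j k = c - h * d * of_bool (j \<le> i) - h * e * of_bool (j \<le> i')"
      and i: "i \<le> n" "i' \<le> n" for c d e i i'
  proof -
    have "(\<Sum>j\<in>{1..Suc n}. ?w j * vertex n x h j k) = (\<Sum>j\<in>{1..Suc n}.
        c * ?w j - h * d * (?w j * of_bool (j \<le> i)) - h * e * (?w j * of_bool (j \<le> i')))"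
      unfolding v by (intro sum.cong refl) (simp add: algebra_simps)
    also have "\<dots> = c * (\<Sum>j\<in>{1..Suc n}. ?w j)
        - h * d * (\<Sum>j\<in>{1..Suc n}. ?w j * of_bool (j \<le> i))
        - h * e * (\<Sum>j\<in>{1..Suc n}. ?w j * of_bool (j \<le> i'))"
      by (simp only: sum_subtractf sum_distrib_left)
    also have "\<dots> = c - d * (real i - (\<Sum>k<2*i. r k)) - e * (real i' - (\<Sum>k<2*i'. r k))"
      using sum_vertex_weight sum_vertex_weight_below[OF i(1)] sum_vertex_weight_below[OF i(2)] h_pos
      by simp
    finally show ?thesis .
  qed
  show ?thesis
  proof (cases rule: bid_cases[where k=k and n=n])
    case 1 thus ?thesis using r_0 vertex_zero by simp
  next
    case 2 thus ?thesis using r_vanishes_above vertex_big by simp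
  next
    case 3
    have "(\<Sum>j\<in>{1..Suc n}. ?w j * vertex n x h j k)
        = (x - real n) - 1 * (real n - (\<Sum>k<2*n. r k)) - 0 * (real n - (\<Sum>k<2*n. r k))"
      by (rule expand) (use 3 vertex_top in simp_all)
    thus ?thesis using 3 r_sum r_even_eq[of n] by simp
  next
    case (4 i)
    have "(\<Sum>j\<in>{1..Suc n}. ?w j * vertex n x h j k)
        = 0 - (-2) * (real i - (\<Sum>k<2*i. r k)) - 0 * (real i - (\<Sum>k<2*i. r k))"
      by (rule expand) (use 4 vertex_even in simp_all)
    thus ?thesis using 4 r_even_eq[of i] by simp
  next
    case (5 i)
    have "(\<Sum>j\<in>{1..Suc n}. ?w j * vertex n x h j k)
        = 1 - 1 * (real (Suc i) - (\<Sum>k<2 * Suc i. r k)) - 1 * (real i - (\<Sum>k<2*i. r k))"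
      by (rule expand) (use 5 vertex_odd in \<open>simp_all add: algebra_simps\<close>)
    moreover have "r (2*i) = real (2*i) - 2 * (\<Sum>k<2*i. r k)" using r_even_eq[of i] 5 by simp
    ultimately show ?thesis using 5 by (simp add: algebra_simps)
  qed
qed

end

section \<open>Densities of the distributions of the statement\<close>

lemma pmf_mix: assumes "0 \<le> l" "l \<le> 1" shows "pmf (mix l A B) k = l * pmf A k + (1 - l) * pmf B k"
proof -
  have "pmf (mix l A B) k = measure_pmf.expectation (bernoulli_pmf l) (\<lambda>b. pmf (if b then A else B) k)"
    unfolding mix_def pmf_bind ..
  also have "\<dots> = (\<Sum>b\<in>UNIV. pmf (if b then A else B) k * pmf (bernoulli_pmf l) b)"
    by (rule integral_measure_pmf_real) auto
  also have "\<dots> = l * pmf A k + (1 - l) * pmf B k"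
    using assms by (simp add: UNIV_bool pmf_bernoulli_True pmf_bernoulli_False algebra_simps)
  finally show ?thesis .
qed

lemma pmf_UO: assumes "1 \<le> n" shows "pmf (UO n) k = (if odd k \<and> k < 2*n then 1 / real n else 0)"
proof -
  let ?S = "(\<lambda>i. 2*i - 1) ` {1..n}"
  have inj: "inj_on (\<lambda>i::nat. 2*i-1) {1..n}" by (auto simp: inj_on_def)
  have card: "card ?S = n" using card_image[OF inj] by simp
  have ne: "?S \<noteq> {}" using assms by auto
  have mem: "k \<in> ?S \<longleftrightarrow> odd k \<and> k < 2*n"
  proof
    assume "k \<in> ?S" then obtain i where "i \<in> {1..n}" "k = 2*i - 1" by auto
    thus "odd k \<and> k < 2*n" by (cases i) auto
  next
    assume a: "odd k \<and> k < 2*n"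
    then obtain i where i: "k = 2*i+1" by (auto elim: oddE)
    hence "Suc i \<in> {1..n}" "k = 2 * Suc i - 1" using a by auto
    thus "k \<in> ?S" by blast
  qed
  show ?thesis unfolding UO_def using pmf_of_set[OF ne, of k] card mem by (simp add: indicator_def)
qed

lemma pmf_UE: "pmf (UE n) k = (if even k \<and> k \<le> 2*n then 1 / (real n + 1) else 0)"
proof -
  let ?S = "(\<lambda>i. 2*i) ` {0..n}"
  have inj: "inj_on (\<lambda>i::nat. 2*i) {0..n}" by (auto simp: inj_on_def)
  have card: "card ?S = n + 1" using card_image[OF inj] by simp
  have ne: "?S \<noteq> {}" by auto
  have mem: "k \<in> ?S \<longleftrightarrow> even k \<and> k \<le> 2*n"
  proof
    assume "k \<in> ?S" thus "even k \<and> k \<le> 2*n" by auto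
  next
    assume a: "even k \<and> k \<le> 2*n"
    then obtain i where i: "k = 2*i" by (auto elim: evenE)
    hence "i \<in> {0..n}" using a by auto
    thus "k \<in> ?S" using i by blast
  qed
  show ?thesis unfolding UE_def using pmf_of_set[OF ne, of k] card mem by (simp add: indicator_def)
qed

definition V_density :: "nat \<Rightarrow> nat \<Rightarrow> nat \<Rightarrow> real" where
  "V_density n j k = (if odd k \<and> (k+1) div 2 < j then 2 / (2 * real n + 1) else 0)
     + (if k = 2*j-1 then 1 / (2 * real n + 1) else 0)
     + (if even k \<and> j \<le> k div 2 \<and> k div 2 \<le> n then 2 / (2 * real n + 1) else 0)"

lemma V_density_eq_sum:
  "V_density n j k = (\<Sum>i\<in>{1..<j}. if k = 2 * i - 1 then 2 / (2 * real n + 1) else 0)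
      + (if k = 2 * j - 1 then 1 / (2 * real n + 1) else 0)
      + (\<Sum>i\<in>{j..n}. if k = 2 * i then 2 / (2 * real n + 1) else 0)"
proof -
  have "(\<Sum>i\<in>{1..<j}. if k = 2 * i - 1 then c else 0) = (if odd k \<and> (k+1) div 2 < j then c else 0)"
    for c :: real
  proof -
    have "(\<Sum>i\<in>{1..<j}. if k = 2 * i - 1 then c else 0)
        = (\<Sum>i\<in>{1..<j}. if i = (k+1) div 2 then (if odd k then c else 0) else 0)"
      by (intro sum.cong refl) (auto elim!: oddE)
    also have "\<dots> = (if odd k \<and> (k+1) div 2 < j then c else 0)"
      by (auto simp: sum.delta elim!: oddE)
    finally show ?thesis .
  qed
  moreover have "(\<Sum>i\<in>{j..n}. if k = 2 * i then c else 0)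
      = (if even k \<and> j \<le> k div 2 \<and> k div 2 \<le> n then c else 0)" for c :: real
  proof -
    have "(\<Sum>i\<in>{j..n}. if k = 2 * i then c else 0)
        = (\<Sum>i\<in>{j..n}. if i = k div 2 then (if even k then c else 0) else 0)"
      by (intro sum.cong refl) auto
    thus ?thesis by (auto simp: sum.delta)
  qed
  ultimately show ?thesis unfolding V_density_def by simp
qed

lemma sum_V_density:
  assumes j: "1 \<le> j" "j \<le> n"
  shows "(\<Sum>k\<le>2*n. V_density n j k) = 1"
proof -
  have A: "(\<Sum>k\<le>2*n. \<Sum>i\<in>{1..<j}. if k = 2 * i - 1 then c else 0) = real (j - 1) * c" for c :: real
  proof -
    have "(\<Sum>k\<le>2*n. \<Sum>i\<in>{1..<j}. if k = 2 * i - 1 then c else 0)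
        = (\<Sum>i\<in>{1..<j}. \<Sum>k\<le>2*n. if k = 2 * i - 1 then c else 0)" by (rule sum.swap)
    also have "\<dots> = (\<Sum>i\<in>{1..<j}. c)" by (intro sum.cong refl) (use j in \<open>auto simp: sum.delta\<close>)
    finally show ?thesis by simp
  qed
  have C: "(\<Sum>k\<le>2*n. \<Sum>i\<in>{j..n}. if k = 2 * i then c else 0) = real (n + 1 - j) * c" for c :: real
  proof -
    have "(\<Sum>k\<le>2*n. \<Sum>i\<in>{j..n}. if k = 2 * i then c else 0)
        = (\<Sum>i\<in>{j..n}. \<Sum>k\<le>2*n. if k = 2 * i then c else 0)" by (rule sum.swap)
    also have "\<dots> = (\<Sum>i\<in>{j..n}. c)" by (intro sum.cong refl) (auto simp: sum.delta)
    finally show ?thesis by simp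
  qed
  have B: "(\<Sum>k\<le>2*n. if k = 2 * j - 1 then c else 0) = c" for c :: real
    using j by (simp add: sum.delta)
  have "(\<Sum>k\<le>2*n. V_density n j k)
      = real (j - 1) * (2 / (2 * real n + 1)) + 1 / (2 * real n + 1) + real (n + 1 - j) * (2 / (2 * real n + 1))"
    unfolding V_density_eq_sum sum.distrib A B C ..
  also have "\<dots> = ((real (j - 1) + real (n + 1 - j)) * 2 + 1) / (2 * real n + 1)"
    by (simp add: add_divide_distrib[symmetric] algebra_simps)
  also have "real (j - 1) + real (n + 1 - j) = real n" using j by (simp add: of_nat_diff)
  finally show ?thesis by (simp add: add_pos_pos)
qed

lemma nn_integral_eq_1_finite_support:
  fixes f :: "'a \<Rightarrow> real"
  assumes "finite A" "\<And>k. k \<notin> A \<Longrightarrow> f k = 0" "\<And>k. 0 \<le> f k" "(\<Sum>k\<in>A. f k) = 1"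
  shows "(\<integral>\<^sup>+ k. ennreal (f k) \<partial>count_space UNIV) = 1"
proof -
  have "(\<integral>\<^sup>+ k. ennreal (f k) \<partial>count_space UNIV) = (\<Sum>k\<in>A. ennreal (f k))"
    by (rule nn_integral_count_space') (use assms in auto)
  also have "\<dots> = ennreal (\<Sum>k\<in>A. f k)" by (rule sum_ennreal) (use assms in auto)
  finally show ?thesis using assms by simp
qed

lemma pmf_V:
  assumes j: "1 \<le> j" "j \<le> n"
  shows "pmf (V n j) k = V_density n j k"
proof -
  have nonneg: "0 \<le> V_density n j k" for k unfolding V_density_def by simp
  have "V_density n j k = 0" if "k \<notin> {..2*n}" for k
    using that j unfolding V_density_def by (auto; presburger)
  hence "(\<integral>\<^sup>+ k. ennreal (V_density n j k) \<partial>count_space UNIV) = 1"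
    using nn_integral_eq_1_finite_support[of "{..2*n}"] nonneg sum_V_density[OF j] by simp
  moreover have "V n j = embed_pmf (V_density n j)"
    unfolding V_def V_density_eq_sum ..
  ultimately show ?thesis by (simp add: pmf_embed_pmf[OF nonneg])
qed

lemma pmf_mix_V_UO:
  assumes n1: "1 \<le> n" and j: "1 \<le> j" "j \<le> n" and x: "0 < x" and h: "0 < h" "h \<le> 1/2"
    and cs: "(h = x - real n \<and> n' = n) \<or> (h = real n + 1 - x \<and> n' = n + 1)"
  shows "pmf (mix ((2 * real n + 1) * h / x) (V n j) (UO n')) k = vertex n x h j k / x"
proof -
  define l where "l = (2 * real n + 1) * h / x"
  have cancel: "(2 * real n + 1) * h * (c / (2 * real n + 1)) = c * h" for c
    by (simp add: field_simps add_pos_pos)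
  have xl: "x * l = (2 * real n + 1) * h" unfolding l_def using x by simp
  have x1l: "x * (1 - l) = real n' * (1 - 2*h)" using xl cs by (auto simp: algebra_simps)
  have n'1: "1 \<le> n'" using cs n1 by auto
  have l0: "0 \<le> l" unfolding l_def using h x by simp
  have "0 \<le> x * (1 - l)" using x1l h by simp
  hence l1: "l \<le> 1" using x by (simp add: zero_le_mult_iff)
  have "x * pmf (mix l (V n j) (UO n')) k = x * (l * pmf (V n j) k + (1 - l) * pmf (UO n') k)"
    by (simp only: pmf_mix[OF l0 l1])
  also have "\<dots> = (x * l) * V_density n j k + (x * (1 - l)) * (if odd k \<and> k < 2*n' then 1 / real n' else 0)"
    unfolding pmf_V[OF j] pmf_UO[OF n'1] by (simp only: algebra_simps)
  also have "\<dots> = (2 * real n + 1) * h * V_density n j k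
      + real n' * (1 - 2*h) * (if odd k \<and> k < 2*n' then 1 / real n' else 0)"
    unfolding xl x1l ..
  also have "\<dots> = vertex n x h j k"
  proof (cases rule: bid_cases[where k=k and n=n])
    case 1 thus ?thesis using j by (simp add: V_density_def vertex_def)
  next
    case 2
    hence "V_density n j k = 0" unfolding V_density_def using j by (auto; presburger)
    thus ?thesis using 2 cs vertex_big[OF 2] by auto
  next
    case 3
    hence "V_density n j k = 0" unfolding V_density_def using j by auto
    thus ?thesis using 3 cs j n'1 vertex_top[of n x h j] by (auto simp: algebra_simps)
  next
    case (4 i)
    hence "k \<noteq> 2*j-1" using j by presburger
    hence "V_density n j k = 2 * of_bool (j \<le> i) / (2 * real n + 1)"
      unfolding V_density_def using 4 j by auto
    thus ?thesis using 4 cancel vertex_even[of i n x h j] by simp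
  next
    case (5 i)
    have U: "real n' * (1 - 2*h) * (if odd k \<and> k < 2*n' then 1 / real n' else 0) = 1 - 2*h"
      using 5 cs n'1 by auto
    have "V_density n j k = (2 * of_bool (Suc i < j) + of_bool (Suc i = j)) / (2 * real n + 1)"
      unfolding V_density_def using 5 j by (auto simp: add_divide_distrib)
    hence "(2 * real n + 1) * h * V_density n j k = h * (2 * of_bool (Suc i < j) + of_bool (Suc i = j))"
      using cancel by (simp add: ac_simps)
    thus ?thesis unfolding U using 5 vertex_odd[of i n x h j] by (auto simp: of_bool_def algebra_simps)
  qed
  finally show ?thesis using x unfolding l_def by (simp add: field_simps)
qed

lemma pmf_mix_UO_UO:
  assumes n1: "1 \<le> n" and x: "real n < x" "x < real n + 1"
  shows "pmf (mix ((real n + 1) * (x - real n) / x) (UO (n+1)) (UO n)) k = vertex n x h (n+1) k / x"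
proof -
  define l where "l = (real n + 1) * (x - real n) / x"
  have x0: "0 < x" using x n1 by linarith
  have l0: "0 \<le> l" unfolding l_def using x x0 by simp
  have l1: "l \<le> 1"
  proof -
    have "(real n + 1) * (x - real n) \<le> x"
    proof -
      have "real n * x \<le> real n * (real n + 1)" using x by (simp add: mult_left_mono)
      thus ?thesis by (simp add: algebra_simps)
    qed
    thus ?thesis unfolding l_def using x0 by simp
  qed
  have np: "real n + 1 \<noteq> 0" by linarith
  have k1: "l * (1 / (real n + 1)) = (x - real n) / x" unfolding l_def using x0 np by simp
  have om: "1 - l = real n * (real n + 1 - x) / x" unfolding l_def using x0 by (simp add: field_simps)
  have k2: "(1 - l) * (1 / real n) = (real n + 1 - x) / x" unfolding om using n1 by simp
  have u1: "pmf (UO (n+1)) k = (if odd k \<and> k < 2*(n+1) then 1 / real (n+1) else 0)"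
    using pmf_UO[of "n+1" k] by simp
  have u2: "pmf (UO n) k = (if odd k \<and> k < 2*n then 1 / real n else 0)" using pmf_UO[OF n1] .
  have pm: "pmf (mix l (UO (n+1)) (UO n)) k = l * (if odd k \<and> k < 2*(n+1) then 1 / real (n+1) else 0)
      + (1 - l) * (if odd k \<and> k < 2*n then 1 / real n else 0)"
    using pmf_mix[OF l0 l1, of "UO (n+1)" "UO n" k] unfolding u1 u2 .
  have "l * (if odd k \<and> k < 2*(n+1) then 1 / real (n+1) else 0)
      + (1 - l) * (if odd k \<and> k < 2*n then 1 / real n else 0) = vertex n x h (n+1) k / x"
  proof (cases rule: bid_cases[where k=k and n=n])
    case 1 thus ?thesis by (simp add: vertex_def)
  next
    case 2 thus ?thesis using vertex_big[OF 2] by auto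
  next
    case 3
    have "vertex n x h (n+1) k = x - real n" using vertex_top[of n x h "n+1"] 3 by (simp add: of_bool_def)
    thus ?thesis using 3 k1 by (simp add: ac_simps)
  next
    case (4 i)
    thus ?thesis using vertex_even[of i n x h "n+1"] by (simp add: of_bool_def)
  next
    case (5 i)
    have "vertex n x h (n+1) k = 1" using vertex_odd[of i n x h "n+1"] 5 by (simp add: of_bool_def)
    moreover have "l * (1 / (real n + 1)) + (1 - l) * (1 / real n) = 1 / x"
      using k1 k2 by (simp add: add_divide_distrib[symmetric])
    ultimately show ?thesis using 5 by (simp add: ac_simps)
  qed
  thus ?thesis using pm unfolding l_def by simp
qed

lemma conv_pmfI:
  fixes G :: "nat \<Rightarrow> 'a pmf" and w :: "nat \<Rightarrow> real"
  assumes J: "finite J" and w0: "\<And>j. j \<in> J \<Longrightarrow> 0 \<le> w j" and w1: "(\<Sum>j\<in>J. w j) = 1"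
    and GS: "\<And>j. j \<in> J \<Longrightarrow> G j \<in> S"
    and X: "\<And>k. pmf X k = (\<Sum>j\<in>J. w j * pmf (G j) k)"
  shows "X \<in> conv_pmf S"
proof -
  define f where "f j = (if j \<in> J then w j else 0)" for j
  have fnn: "0 \<le> f j" for j unfolding f_def using w0 by auto
  have int: "(\<integral>\<^sup>+ j. ennreal (f j) \<partial>count_space UNIV) = 1"
    using nn_integral_eq_1_finite_support[OF J] fnn w1 unfolding f_def by simp
  define W where "W = embed_pmf f"
  have pW: "pmf W j = f j" for j unfolding W_def using pmf_embed_pmf[OF fnn int] by simp
  have sW: "set_pmf W \<subseteq> J" unfolding W_def set_embed_pmf[OF fnn int] f_def by auto
  define Q where "Q = map_pmf G W"
  have finQ: "finite (set_pmf Q)" unfolding Q_def using finite_subset[OF sW J] by simp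
  have sQ: "set_pmf Q \<subseteq> S" unfolding Q_def using sW GS by auto
  have "X = join_pmf Q"
  proof (rule pmf_eqI)
    fix k
    have "pmf (join_pmf Q) k = measure_pmf.expectation W (\<lambda>j. pmf (G j) k)"
      unfolding pmf_join Q_def integral_map_pmf ..
    also have "\<dots> = (\<Sum>j\<in>J. pmf (G j) k * pmf W j)"
      by (rule integral_measure_pmf_real) (use J sW in auto)
    also have "\<dots> = (\<Sum>j\<in>J. w j * pmf (G j) k)" by (intro sum.cong refl) (simp add: pW f_def)
    finally show "pmf X k = pmf (join_pmf Q) k" using X by simp
  qed
  thus ?thesis unfolding conv_pmf_def using finQ sQ by blast
qed

section \<open>Shape of the equilibria\<close>

lemma gain_join_pmf:
  assumes fin: "finite (set_pmf Q)"
  shows "gain v (join_pmf Q) k = measure_pmf.expectation Q (\<lambda>G. gain v G k)"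
proof -
  let ?A = "set_pmf Q"
  have E: "measure_pmf.expectation Q f = (\<Sum>G\<in>?A. f G * pmf Q G)" for f :: "nat pmf \<Rightarrow> real"
    by (rule integral_measure_pmf_real[OF fin]) auto
  have one: "(\<Sum>G\<in>?A. pmf Q G) = 1" by (rule sum_pmf_eq_1[OF fin]) simp
  have pj: "pmf (join_pmf Q) i = (\<Sum>G\<in>?A. pmf G i * pmf Q G)" for i unfolding pmf_join E ..
  have "gain v (join_pmf Q) k = v * (\<Sum>i<k. \<Sum>G\<in>?A. pmf G i * pmf Q G)
      + v / 2 * (\<Sum>G\<in>?A. pmf G k * pmf Q G) - real k * (\<Sum>G\<in>?A. pmf Q G)"
    unfolding gain_def pj one by simp
  also have "\<dots> = (\<Sum>G\<in>?A. gain v G k * pmf Q G)"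
    unfolding gain_def
    by (simp add: sum.swap[of _ "{..<k}"] sum_distrib_left sum_distrib_right sum_subtractf sum.distrib algebra_simps)
  finally show ?thesis unfolding E .
qed

lemma gain_conv_pmf_le:
  assumes "X \<in> conv_pmf S" and "\<And>G. G \<in> S \<Longrightarrow> gain v G k \<le> c"
  shows "gain v X k \<le> c"
proof -
  obtain Q where Q: "X = join_pmf Q" "finite (set_pmf Q)" "set_pmf Q \<subseteq> S"
    using assms(1) unfolding conv_pmf_def by blast
  have "measure_pmf.expectation Q (\<lambda>G. gain v G k) \<le> c"
    using Q assms(2)
    by (intro measure_pmf.integral_le_const) (auto simp: AE_measure_pmf_iff intro: integrable_measure_pmf_finite)
  thus ?thesis using gain_join_pmf[OF Q(2)] Q(1) by simp
qed

lemma gain_conv_pmf_eq: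
  assumes "X \<in> conv_pmf S" and "\<And>G. G \<in> S \<Longrightarrow> gain v G k = c"
  shows "gain v X k = c"
proof -
  obtain Q where Q: "X = join_pmf Q" "finite (set_pmf Q)" "set_pmf Q \<subseteq> S"
    using assms(1) unfolding conv_pmf_def by blast
  have "measure_pmf.expectation Q (\<lambda>G. gain v G k) = measure_pmf.expectation Q (\<lambda>G. c)"
    using Q assms(2) by (intro integral_cong_AE) (auto simp: AE_measure_pmf_iff)
  thus ?thesis using gain_join_pmf[OF Q(2)] Q(1) by simp
qed

lemma set_pmf_conv_pmf: "X \<in> conv_pmf S \<Longrightarrow> set_pmf X \<subseteq> \<Union> (set_pmf ` S)"
  unfolding conv_pmf_def by (auto simp: set_pmf_join_pmf; blast)

lemma pmf_equilibrium_Y: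
  fixes y :: real and m :: nat
  assumes ym: "real m + 1 < y"
  shows "y * pmf (mix ((real m + 1) / y) (UE m) (return_pmf 0)) k
       = (if k = 0 then y - real m else if even k \<and> k \<le> 2*m then 1 else 0)"
proof -
  have y0: "0 < y" using ym by linarith
  have "0 \<le> (real m + 1) / y" "(real m + 1) / y \<le> 1" using ym y0 by simp_all
  hence "pmf (mix ((real m + 1) / y) (UE m) (return_pmf 0)) k
      = (real m + 1) / y * pmf (UE m) k + (1 - (real m + 1) / y) * pmf (return_pmf 0) k"
    by (rule pmf_mix)
  thus ?thesis using y0 by (cases "k = 0") (auto simp: pmf_UE field_simps)
qed

lemma score_equilibrium_Y:
  fixes s :: "nat \<Rightarrow> real" and y :: real and m :: nat
  assumes s: "\<And>k. s k = (if k = 0 then y - real m else if even k \<and> k \<le> 2*m then 1 else 0)"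
    and ym: "real m + 1 < y"
  shows "score s k \<le> 2*y - 2*real m - 1"
    and "1 \<le> k \<Longrightarrow> k \<le> 2*m+1 \<Longrightarrow> score s k = 2*y - 2*real m - 1"
proof -
  have pre: "i \<le> m \<Longrightarrow> (\<Sum>k<2*i+1. s k) = y - real m + real i" for i
  proof (induction i)
    case (Suc i)
    have e: "2 * Suc i + 1 = Suc (Suc (2*i+1))" by simp
    have "s (2*i+1) = 0" "s (Suc (2*i+1)) = 1" using s Suc.prems by auto
    thus ?case using Suc unfolding e by simp
  qed (simp add: s)
  have val: "score s k = 2*y - 2*real m - 1" if k: "1 \<le> k" "k \<le> 2*m+1" for k
  proof (cases "even k")
    case True
    then obtain j where "k = 2*j" by (auto elim: evenE)
    with k obtain i where i: "k = Suc (2*i+1)" by (cases j) auto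
    have "k \<le> 2*m" using k True by presburger
    hence "i \<le> m" "s k = 1" using i s[of k] True by simp_all
    thus ?thesis using pre[of i] s[of "2*i+1"] i unfolding score_def by simp
  next
    case False
    then obtain i where i: "k = 2*i+1" by (auto elim: oddE)
    thus ?thesis using pre[of i] s[of k] k unfolding score_def by simp
  qed
  thus "1 \<le> k \<Longrightarrow> k \<le> 2*m+1 \<Longrightarrow> score s k = 2*y - 2*real m - 1" by blast
  show "score s k \<le> 2*y - 2*real m - 1"
  proof -
    consider "k = 0" | "1 \<le> k" "k \<le> 2*m+1" | "2*m+1 < k" by linarith
    thus ?thesis
    proof cases
      case 3
      have "(\<Sum>i<k. s i) = (\<Sum>i<2*m+1. s i)"
        using 3 s by (intro sum_lessThan_eq_zero_tail) auto
      thus ?thesis using pre[of m] s[of k] 3 unfolding score_def by simp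
    qed (use s ym val in \<open>auto simp: score_def\<close>)
  qed
qed

lemma gain_le_bid_bound: "0 < c \<Longrightarrow> gain c M k \<le> c - real k"
proof -
  assume c: "0 < c"
  have "(\<Sum>i<Suc k. pmf M i) \<le> 1" by (rule sum_pmf_le_1) simp
  hence "c * ((\<Sum>i<k. pmf M i) + pmf M k) \<le> c * 1" using c by (intro mult_left_mono) auto
  moreover have "c / 2 * pmf M k \<le> c * pmf M k" using c by (simp add: mult_right_mono)
  ultimately show ?thesis unfolding gain_def by (simp add: algebra_simps)
qed

text \<open>Bidding above the larger valuation yields a negative gain, while bidding 0 does not.\<close>
lemma nash_support_le:
  assumes NE: "nash v1 v2 X Y" and v: "v2 \<le> v1" "0 < v2" and k: "k \<in> set_pmf X \<union> set_pmf Y"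
  shows "real k \<le> v1"
proof -
  have g0: "0 \<le> gain c M 0" if "0 < c" for c M using that unfolding gain_def by simp
  from k show ?thesis
  proof
    assume "k \<in> set_pmf X"
    hence "gain v1 Y 0 \<le> gain v1 Y k" using nash_gain(1,2)[OF NE] by metis
    thus ?thesis using g0[of v1 Y] gain_le_bid_bound[of v1 Y k] v by linarith
  next
    assume "k \<in> set_pmf Y"
    hence "gain v2 X 0 \<le> gain v2 X k" using nash_gain(3,4)[OF NE] by metis
    thus ?thesis using g0[of v2 X] gain_le_bid_bound[of v2 X k] v by linarith
  qed
qed

lemma nash_scaled_equilibrium:
  assumes NE: "nash (2*y) (2*x) X Y" and x: "0 < x" "x \<le> y"
  shows "scaled_equilibrium (\<lambda>k. x * pmf X k) (\<lambda>k. y * pmf Y k)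
           (payoff1 (2*y) X Y) (payoff2 (2*x) Y X) (nat \<lfloor>2*y\<rfloor> + 1)"
proof
  have "k < nat \<lfloor>2*y\<rfloor> + 1" if "k \<in> set_pmf X \<union> set_pmf Y" for k
  proof -
    have "int k \<le> \<lfloor>2*y\<rfloor>" using nash_support_le[OF NE _ _ that] x by (simp add: le_floor_iff)
    thus ?thesis by linarith
  qed
  hence "pmf X k = 0" "pmf Y k = 0" if "nat \<lfloor>2*y\<rfloor> + 1 \<le> k" for k
    using that by (auto simp: set_pmf_iff not_less[symmetric])
  thus "nat \<lfloor>2*y\<rfloor> + 1 \<le> k \<Longrightarrow> x * pmf X k = 0" "nat \<lfloor>2*y\<rfloor> + 1 \<le> k \<Longrightarrow> y * pmf Y k = 0" for k
    by simp_all
  show "score (\<lambda>k. x * pmf X k) k \<le> payoff2 (2*x) Y X"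
    "0 < y * pmf Y k \<Longrightarrow> score (\<lambda>k. x * pmf X k) k = payoff2 (2*x) Y X"
    "score (\<lambda>k. y * pmf Y k) k \<le> payoff1 (2*y) X Y"
    "0 < x * pmf X k \<Longrightarrow> score (\<lambda>k. y * pmf Y k) k = payoff1 (2*y) X Y" for k
    using nash_gain[OF NE] x by (auto simp: gain_eq_score[symmetric] set_pmf_iff zero_less_mult_iff)
qed (use x in auto)

lemma sums_scaled_pmf:
  assumes "\<And>k. N \<le> k \<Longrightarrow> c * pmf M k = 0" "0 < c"
  shows "(\<Sum>k<N. c * pmf M k) = c" "(\<Sum>k<N. real k * (c * pmf M k)) = c * mean M"
proof -
  have "set_pmf M \<subseteq> {..<N}"
  proof
    fix k assume "k \<in> set_pmf M"
    thus "k \<in> {..<N}" using assms by (cases "N \<le> k") (auto simp: set_pmf_iff)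
  qed
  hence "(\<Sum>k<N. pmf M k) = 1" "mean M = (\<Sum>k<N. real k * pmf M k)"
    unfolding mean_def by (auto simp: sum_pmf_eq_1 ac_simps intro: integral_measure_pmf_real)
  thus "(\<Sum>k<N. c * pmf M k) = c" "(\<Sum>k<N. real k * (c * pmf M k)) = c * mean M"
    by (simp_all add: sum_distrib_left[symmetric] algebra_simps)
qed

lemma nash_shape:
  fixes x y b \<alpha> :: real and m :: nat and X Y :: "nat pmf"
  assumes x: "0 < x" "x \<le> y" and m: "1 \<le> m" and b: "0 < b" "b < real m"
    and \<alpha>: "0 < \<alpha>" "\<alpha> < 1" and mX: "mean X = real m + \<alpha>" and mY: "mean Y = b"
    and NE: "nash (2*y) (2*x) X Y"
  shows "real m < x" "x < real m + 1" "real m + 1 < y"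
    and "y * b = real m * (real m + 1)" "x * \<alpha> = (real m + 1) * (x - real m)"
    and "\<And>k. y * pmf Y k = (if k = 0 then y - real m else if even k \<and> k \<le> 2*m then 1 else 0)"
    and "payoff1 (2*y) X Y = 2*y - 2*real m - 1" "payoff2 (2*x) Y X = 0"
    and "\<And>k. score (\<lambda>k. x * pmf X k) k \<le> 0" "\<And>i. i \<le> m \<Longrightarrow> score (\<lambda>k. x * pmf X k) (2*i) = 0"
    and "pmf X 0 = 0" "\<And>k. 2*m+1 < k \<Longrightarrow> pmf X k = 0"
proof -
  define r where "r k = x * pmf X k" for k
  define s where "s k = y * pmf Y k" for k
  define N where "N = nat \<lfloor>2*y\<rfloor> + 1"
  interpret S0: scaled_equilibrium r s "payoff1 (2*y) X Y" "payoff2 (2*x) Y X" N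
    unfolding r_def s_def N_def using nash_scaled_equilibrium[OF NE x] .
  have xv: "x = (\<Sum>k<N. r k)" and MX: "(\<Sum>k<N. real k * r k) = x * (real m + \<alpha>)"
    using sums_scaled_pmf[where N=N and M=X and c=x] S0.r_vanishes x mX unfolding r_def by auto
  have yv: "y = (\<Sum>k<N. s k)" and MY: "(\<Sum>k<N. real k * s k) = y * b"
    using sums_scaled_pmf[where N=N and M=Y and c=y] S0.s_vanishes x mY unfolding s_def by auto
  have "0 < payoff1 (2*y) X Y" using S0.p1_pos[OF xv yv x(1) x(2) MX \<alpha>(1) MY b(2)] .
  moreover have "\<exists>k. 0 < s k"
  proof (rule ccontr)
    assume "\<not> (\<exists>k. 0 < s k)"
    hence "(\<Sum>k<N. s k) \<le> 0" by (simp add: sum_nonpos not_less)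
    thus False using yv x by simp
  qed
  ultimately interpret S: scaled_equilibrium_means r s "payoff1 (2*y) X Y" "payoff2 (2*x) Y X" N x y b \<alpha> m
    using S0.s0_pos xv yv x MX \<alpha> m MY b by unfold_locales auto
  have "real m * (real m + 1) = y * b" using S.equilibrium_shape(9) by simp
  also have "\<dots> < y * real m" using b x by simp
  finally have "real m * (real m + 1) < real m * y" by (simp add: mult.commute)
  hence ym: "real m + 1 < y" using m by simp
  show "real m < x" "x < real m + 1" "real m + 1 < y" "y * b = real m * (real m + 1)"
    "x * \<alpha> = (real m + 1) * (x - real m)"
    "payoff1 (2*y) X Y = 2*y - 2*real m - 1" "payoff2 (2*x) Y X = 0"
    using S.equilibrium_shape ym by simp_all
  show "y * pmf Y k = (if k = 0 then y - real m else if even k \<and> k \<le> 2*m then 1 else 0)" for k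
    using S.equilibrium_shape(4) S.equilibrium_shape(5)[of k] unfolding s_def by (cases "k = 0") auto
  show "pmf X 0 = 0" "2*m+1 < k \<Longrightarrow> pmf X k = 0" for k
    using S.equilibrium_shape(1) S.equilibrium_shape(6)[of k] x unfolding r_def by auto
  have sk: "0 < s (2*i)" if "i \<le> m" for i
    using S.equilibrium_shape(4) S.equilibrium_shape(5)[of "2*i"] ym that by (cases "i = 0") auto
  show "score (\<lambda>k. x * pmf X k) k \<le> 0" "i \<le> m \<Longrightarrow> score (\<lambda>k. x * pmf X k) (2*i) = 0" for k i
    using S0.score_r_le[of k] S0.score_r_eq[OF sk] S.equilibrium_shape(2)
    unfolding r_def by auto
qed

section \<open>Generators of the equilibrium strategies of player 1\<close>

definition nearest :: "nat \<Rightarrow> real \<Rightarrow> nat" where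
  "nearest m x = (if x \<le> real m + 1/2 then m else m + 1)"

definition generator :: "nat \<Rightarrow> real \<Rightarrow> real \<Rightarrow> nat \<Rightarrow> nat pmf" where
  "generator m x \<alpha> j = (if j \<le> m
     then mix ((2 * real m + 1) * \<bar>x - real (nearest m x)\<bar> / x) (V m j) (UO (nearest m x))
     else mix \<alpha> (UO (m + 1)) (UO m))"

context
  fixes m :: nat and x \<alpha> :: real
  assumes m_ge_1: "1 \<le> m" and x_gt: "real m < x" and x_lt: "x < real m + 1"
    and \<alpha>_eq: "\<alpha> = (real m + 1) * (x - real m) / x"
begin

lemma nearest_cases:
  "(\<bar>x - real (nearest m x)\<bar> = x - real m \<and> nearest m x = m)
    \<or> (\<bar>x - real (nearest m x)\<bar> = real m + 1 - x \<and> nearest m x = m + 1)"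
  using x_gt x_lt unfolding nearest_def by auto

lemma nearest_dist_bounds:
  "0 < \<bar>x - real (nearest m x)\<bar>" "\<bar>x - real (nearest m x)\<bar> \<le> 1/2"
  "\<bar>x - real (nearest m x)\<bar> \<le> real m + 1 - x"
  using x_gt x_lt unfolding nearest_def by auto

lemma pmf_generator:
  assumes "j \<in> {1..Suc m}"
  shows "pmf (generator m x \<alpha> j) k = vertex m x \<bar>x - real (nearest m x)\<bar> j k / x"
proof (cases "j \<le> m")
  case True
  thus ?thesis unfolding generator_def
    using pmf_mix_V_UO[OF m_ge_1 _ True _ nearest_dist_bounds(1,2) nearest_cases] assms x_gt m_ge_1
    by simp
next
  case False
  hence "j = Suc m" using assms by simp
  thus ?thesis unfolding generator_def using pmf_mix_UO_UO[OF m_ge_1 x_gt x_lt] \<alpha>_eq by simp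
qed

lemma generators_eq:
  assumes "\<delta> = (2 * real m + 1) / (real m + 1)" and "\<sigma> = (2 * real m + 1) / real m"
    and "cond \<longleftrightarrow> x \<le> real m + 1/2"
  shows "insert (mix \<alpha> (UO (m + 1)) (UO m))
      (if cond then {mix (\<alpha> * \<delta>) (V m j) (UO m) | j. 1 \<le> j \<and> j \<le> m}
       else {mix ((1 - \<alpha>) * \<sigma>) (V m j) (UO (m + 1)) | j. 1 \<le> j \<and> j \<le> m})
    = generator m x \<alpha> ` {1..Suc m}"
proof -
  have x0: "x \<noteq> 0" using x_gt by linarith
  have cancel: "p * h / x * (c / p) = c * h / x" if "p \<noteq> 0" for p h c :: real
    using that x0 by (simp add: field_simps)
  have coef: "(if x \<le> real m + 1/2 then \<alpha> * \<delta> else (1 - \<alpha>) * \<sigma>)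
      = (2 * real m + 1) * \<bar>x - real (nearest m x)\<bar> / x"
  proof (cases "x \<le> real m + 1/2")
    case True
    have "real m + 1 \<noteq> 0" by linarith
    thus ?thesis using True x_gt cancel unfolding assms \<alpha>_eq nearest_def by simp
  next
    case False
    have "1 - \<alpha> = real m * (real m + 1 - x) / x" unfolding \<alpha>_eq using x0 by (simp add: field_simps)
    moreover have "real m \<noteq> 0" using m_ge_1 by simp
    ultimately show ?thesis using False x_lt cancel unfolding assms nearest_def by simp
  qed
  have "generator m x \<alpha> ` {1..Suc m} = insert (generator m x \<alpha> (Suc m)) (generator m x \<alpha> ` {1..m})"
    using m_ge_1 by (auto simp: atLeastAtMostSuc_conv)
  moreover have "generator m x \<alpha> (Suc m) = mix \<alpha> (UO (m + 1)) (UO m)"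
    unfolding generator_def by simp
  moreover have "(if cond then {mix (\<alpha> * \<delta>) (V m j) (UO m) | j. 1 \<le> j \<and> j \<le> m}
       else {mix ((1 - \<alpha>) * \<sigma>) (V m j) (UO (m + 1)) | j. 1 \<le> j \<and> j \<le> m})
    = generator m x \<alpha> ` {1..m}"
    using coef assms(3) unfolding generator_def nearest_def by (auto simp: image_def split: if_splits)
  ultimately show ?thesis by simp
qed

lemma gain_generator:
  assumes "G \<in> generator m x \<alpha> ` {1..Suc m}"
  shows "gain (2*x) G k \<le> 0" and "i \<le> m \<Longrightarrow> gain (2*x) G (2*i) = 0"
    and "set_pmf G \<subseteq> {1..2*m+1}"
proof -
  obtain j where j: "j \<in> {1..Suc m}" "G = generator m x \<alpha> j" using assms by blast
  let ?h = "\<bar>x - real (nearest m x)\<bar>"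
  have x0: "0 < x" using x_gt by linarith
  have pG: "x * pmf G i = vertex m x ?h j i" for i using pmf_generator[OF j(1)] j(2) x0 by simp
  have "gain (2*x) G k = score (vertex m x ?h j) k" for k unfolding gain_eq_score pG ..
  thus "gain (2*x) G k \<le> 0" "i \<le> m \<Longrightarrow> gain (2*x) G (2*i) = 0"
    using score_vertex[of j m ?h x] j(1) m_ge_1 nearest_dist_bounds x_lt by auto
  show "set_pmf G \<subseteq> {1..2*m+1}"
  proof
    fix i assume "i \<in> set_pmf G"
    hence "vertex m x ?h j i \<noteq> 0" using pG[of i] x0 by (auto simp: set_pmf_iff)
    thus "i \<in> {1..2*m+1}" using vertex_zero vertex_big[of m i] by (cases "i = 0"; cases "2*m+1 < i") auto
  qed
qed

lemma mem_conv_generators: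
  assumes score_nonpos: "\<And>k. score (\<lambda>k. x * pmf X k) k \<le> 0"
    and score_even: "\<And>i. i \<le> m \<Longrightarrow> score (\<lambda>k. x * pmf X k) (2*i) = 0"
    and pmf_0: "pmf X 0 = 0" and pmf_big: "\<And>k. 2*m+1 < k \<Longrightarrow> pmf X k = 0"
  shows "X \<in> conv_pmf (generator m x \<alpha> ` {1..Suc m})"
proof -
  let ?h = "\<bar>x - real (nearest m x)\<bar>"
  define r where "r k = x * pmf X k" for k
  have x0: "0 < x" using x_gt by linarith
  have "set_pmf X \<subseteq> {..<2*m+2}"
  proof
    fix k assume "k \<in> set_pmf X"
    thus "k \<in> {..<2*m+2}" using pmf_big[of k] by (cases "2*m+1 < k") (auto simp: set_pmf_iff)
  qed
  hence "(\<Sum>k<2*m+2. pmf X k) = 1" by (rule sum_pmf_eq_1[rotated]) simp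
  hence "(\<Sum>k<2*m+2. r k) = x" unfolding r_def by (simp add: sum_distrib_left[symmetric])
  moreover have "?h = x - real m \<or> ?h = real m + 1 - x" using nearest_cases by auto
  ultimately have hyps: "r 0 = 0" "\<And>k. 2*m+1 < k \<Longrightarrow> r k = 0" "(\<Sum>k<2*m+2. r k) = x"
    "\<And>i. i \<le> m \<Longrightarrow> score r (2*i) = 0" "\<And>k. score r k \<le> 0" "\<And>k. 0 \<le> r k" "0 < ?h"
    "?h = x - real m \<or> ?h = real m + 1 - x"
    using pmf_0 pmf_big score_even score_nonpos x0 nearest_dist_bounds(1) unfolding r_def by auto
  define lam where "lam = vertex_weight r m ?h"
  have lam: "\<And>j. 0 \<le> lam j" "(\<Sum>j\<in>{1..Suc m}. lam j) = 1"
    and r: "\<And>k. r k = (\<Sum>j\<in>{1..Suc m}. lam j * vertex m x ?h j k)"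
    unfolding lam_def using vertex_weight_nonneg[OF hyps] sum_vertex_weight[OF hyps]
      vertex_decomposition[OF hyps] by blast+
  show ?thesis
  proof (rule conv_pmfI[where w=lam and G="generator m x \<alpha>" and J="{1..Suc m}"])
    fix k
    have "pmf X k = r k / x" unfolding r_def using x0 by simp
    also have "\<dots> = (\<Sum>j\<in>{1..Suc m}. lam j * (vertex m x ?h j k / x))"
      unfolding r by (simp only: sum_divide_distrib times_divide_eq_right)
    also have "\<dots> = (\<Sum>j\<in>{1..Suc m}. lam j * pmf (generator m x \<alpha> j) k)"
      using pmf_generator by (intro sum.cong refl) simp
    finally show "pmf X k = (\<Sum>j\<in>{1..Suc m}. lam j * pmf (generator m x \<alpha> j) k)" .
  qed (use lam in auto)
qed

lemma nash_of_generators: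
  assumes X: "strategy X" and Y: "strategy Y" and y: "real m + 1 < y"
    and Yeq: "Y = mix ((real m + 1) / y) (UE m) (return_pmf 0)"
    and Xmem: "X \<in> conv_pmf (generator m x \<alpha> ` {1..Suc m})"
  shows "nash (2*y) (2*x) X Y"
proof -
  define s where "s k = (if k = 0 then y - real m else if even k \<and> k \<le> 2*m then 1 else 0)" for k
  have y0: "0 < y" using y by linarith
  have sY: "s = (\<lambda>k. y * pmf Y k)" unfolding s_def Yeq pmf_equilibrium_Y[OF y] ..
  have gainY: "gain (2*y) Y k = score s k" for k unfolding sY gain_eq_score ..
  have setX: "set_pmf X \<subseteq> {1..2*m+1}" using set_pmf_conv_pmf[OF Xmem] gain_generator(3) by blast
  have setY: "\<exists>i\<le>m. k = 2*i" if "k \<in> set_pmf Y" for k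
  proof -
    have "s k \<noteq> 0" using that y0 unfolding sY by (simp add: set_pmf_iff)
    hence "even k \<and> k \<le> 2*m" unfolding s_def by (auto split: if_splits)
    thus ?thesis by (auto elim!: evenE)
  qed
  show ?thesis
  proof (rule nash_of_gain[OF X Y])
    show "gain (2*y) Y k \<le> 2*y - 2*real m - 1" for k
      unfolding gainY using score_equilibrium_Y(1)[OF s_def y] .
    show "gain (2*y) Y k = 2*y - 2*real m - 1" if "k \<in> set_pmf X" for k
      unfolding gainY using score_equilibrium_Y(2)[OF s_def y] setX that by auto
    show "gain (2*x) X k \<le> 0" for k
      using gain_conv_pmf_le[OF Xmem] gain_generator(1) by blast
    show "gain (2*x) X k = 0" if "k \<in> set_pmf Y" for k
      using gain_conv_pmf_eq[OF Xmem] gain_generator(2) setY[OF that] by auto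
  qed
qed

end

lemma nash_iff_profile:
  fixes x y b \<alpha> :: real and m :: nat and X Y :: "nat pmf"
  assumes x: "0 < x" "x \<le> y" and m: "1 \<le> m" and b: "0 < b" "b < real m"
    and \<alpha>: "0 < \<alpha>" "\<alpha> < 1" and sX: "strategy X" and sY: "strategy Y"
    and mX: "mean X = real m + \<alpha>" and mY: "mean Y = b"
  shows "nash (2*y) (2*x) X Y \<longleftrightarrow>
    real m < x \<and> x < real m + 1 \<and> real m + 1 < y \<and>
    y * b = real m * (real m + 1) \<and> x * \<alpha> = (real m + 1) * (x - real m) \<and>
    Y = mix ((real m + 1) / y) (UE m) (return_pmf 0) \<and>
    X \<in> conv_pmf (generator m x \<alpha> ` {1..Suc m})"
proof
  assume NE: "nash (2*y) (2*x) X Y"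
  note S = nash_shape[OF x m b \<alpha> mX mY NE]
  have \<alpha>_eq: "\<alpha> = (real m + 1) * (x - real m) / x" using S(5) x by (simp add: field_simps)
  have "Y = mix ((real m + 1) / y) (UE m) (return_pmf 0)"
  proof (rule pmf_eqI)
    fix k
    have "y * pmf Y k = y * pmf (mix ((real m + 1) / y) (UE m) (return_pmf 0)) k"
      using S(6) pmf_equilibrium_Y[OF S(3)] by simp
    thus "pmf Y k = pmf (mix ((real m + 1) / y) (UE m) (return_pmf 0)) k" using x by simp
  qed
  moreover have "X \<in> conv_pmf (generator m x \<alpha> ` {1..Suc m})"
    using mem_conv_generators[OF m S(1,2) \<alpha>_eq S(9,10,11,12)] by blast
  ultimately show "real m < x \<and> x < real m + 1 \<and> real m + 1 < y \<and>
    y * b = real m * (real m + 1) \<and> x * \<alpha> = (real m + 1) * (x - real m) \<and>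
    Y = mix ((real m + 1) / y) (UE m) (return_pmf 0) \<and>
    X \<in> conv_pmf (generator m x \<alpha> ` {1..Suc m})" using S by simp
next
  assume P: "real m < x \<and> x < real m + 1 \<and> real m + 1 < y \<and>
    y * b = real m * (real m + 1) \<and> x * \<alpha> = (real m + 1) * (x - real m) \<and>
    Y = mix ((real m + 1) / y) (UE m) (return_pmf 0) \<and>
    X \<in> conv_pmf (generator m x \<alpha> ` {1..Suc m})"
  hence "\<alpha> = (real m + 1) * (x - real m) / x" using x by (simp add: field_simps)
  thus "nash (2*y) (2*x) X Y" using nash_of_generators[OF m _ _ _ sX sY] P by blast
qed

lemma characterisation_iff_profile:
  fixes x y b \<alpha> :: real and m :: nat and X Y :: "nat pmf"
  assumes x: "0 < x" and m: "1 \<le> m"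
  shows "(let c = \<lceil>x\<rceil>;
           \<delta> = (2 * real_of_int c - 1) / real_of_int c;
           \<sigma> = (2 * real_of_int c - 1) / (real_of_int c - 1);
           XS = (if x \<le> real_of_int c - 1 / 2
                 then {mix (\<alpha> * \<delta>) (V m j) (UO m) | j. 1 \<le> j \<and> j \<le> m}
                 else {mix ((1 - \<alpha>) * \<sigma>) (V m j) (UO (m + 1)) | j. 1 \<le> j \<and> j \<le> m})
       in y > real_of_int c \<and> real_of_int c > x \<and>
          int m = c - 1 \<and>
          b = (real_of_int c - 1) * real_of_int c / y \<and>
          \<alpha> = real_of_int c / x * (x - real_of_int \<lfloor>x\<rfloor>) \<and>
          Y = mix (b / real m) (UE m) (return_pmf 0) \<and>
          X \<in> conv_pmf (insert (mix \<alpha> (UO (m + 1)) (UO m)) XS))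
    \<longleftrightarrow> real m < x \<and> x < real m + 1 \<and> real m + 1 < y \<and>
    y * b = real m * (real m + 1) \<and> x * \<alpha> = (real m + 1) * (x - real m) \<and>
    Y = mix ((real m + 1) / y) (UE m) (return_pmf 0) \<and>
    X \<in> conv_pmf (generator m x \<alpha> ` {1..Suc m})"
    (is "?L \<longleftrightarrow> ?R")
proof (cases "real m < x \<and> x < real m + 1 \<and> \<alpha> = (real m + 1) * (x - real m) / x")
  case True
  hence c: "\<lceil>x\<rceil> = int m + 1" and f: "\<lfloor>x\<rfloor> = int m"
    by (auto intro: ceiling_eq floor_unique)
  have XS: "insert (mix \<alpha> (UO (m + 1)) (UO m))
      (if x \<le> real_of_int \<lceil>x\<rceil> - 1 / 2
       then {mix (\<alpha> * ((2 * real_of_int \<lceil>x\<rceil> - 1) / real_of_int \<lceil>x\<rceil>)) (V m j) (UO m) | j. 1 \<le> j \<and> j \<le> m}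
       else {mix ((1 - \<alpha>) * ((2 * real_of_int \<lceil>x\<rceil> - 1) / (real_of_int \<lceil>x\<rceil> - 1))) (V m j) (UO (m + 1)) | j. 1 \<le> j \<and> j \<le> m})
    = generator m x \<alpha> ` {1..Suc m}"
    using True by (intro generators_eq[OF m]) (auto simp: c)
  have cr: "real_of_int \<lceil>x\<rceil> = real m + 1" and fr: "real_of_int \<lfloor>x\<rfloor> = real m" using c f by simp_all
  have b_iff: "b = (real m + 1 - 1) * (real m + 1) / y \<longleftrightarrow> y * b = real m * (real m + 1)" if "real m + 1 < y"
    using that by (auto simp: field_simps)
  have Y_iff: "b / real m = (real m + 1) / y" if "y * b = real m * (real m + 1)" "real m + 1 < y"
    using that m by (auto simp: field_simps)
  have \<alpha>: "\<alpha> = (real m + 1) / x * (x - real m)" "x * \<alpha> = (real m + 1) * (x - real m)"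
    using True x by (auto simp: field_simps)
  show ?thesis
    unfolding Let_def XS unfolding cr fr using b_iff Y_iff \<alpha> True c by auto
next
  case False
  have "\<not> ?L"
  proof
    assume ?L
    hence L: "x < real_of_int \<lceil>x\<rceil>" "int m = \<lceil>x\<rceil> - 1"
      "\<alpha> = real_of_int \<lceil>x\<rceil> / x * (x - real_of_int \<lfloor>x\<rfloor>)"
      unfolding Let_def by blast+
    have c: "\<lceil>x\<rceil> = int m + 1" using L(2) by simp
    have mx: "real m < x" "x < real m + 1" using c[unfolded ceiling_eq_iff] L(1) unfolding c by simp_all
    hence "\<lfloor>x\<rfloor> = int m" by (intro floor_unique) auto
    hence "\<alpha> = (real m + 1) * (x - real m) / x" using L(3) c by simp
    thus False using False mx by simp
  qed
  moreover have "\<not> ?R" using False x by (auto simp: field_simps)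
  ultimately show ?thesis by blast
qed

theorem proposition6:
  fixes v1 v2 :: real and m :: nat and b \<alpha> :: real and X Y :: "nat pmf"
  assumes "v1 \<ge> v2" and "v2 > 0"
    and "m \<ge> 1" and "0 < b" and "b < real m"
    and "0 < \<alpha>" and "\<alpha> < 1"
    and "strategy X" and "strategy Y"
    and "mean X = real m + \<alpha>" and "mean Y = b"
  shows "(nash v1 v2 X Y \<longleftrightarrow>
      (let c = \<lceil>v2 / 2\<rceil>;
           \<delta> = (2 * real_of_int c - 1) / real_of_int c;
           \<sigma> = (2 * real_of_int c - 1) / (real_of_int c - 1);
           XS = (if v2 / 2 \<le> real_of_int c - 1 / 2
                 then {mix (\<alpha> * \<delta>) (V m j) (UO m) | j. 1 \<le> j \<and> j \<le> m}
                 else {mix ((1 - \<alpha>) * \<sigma>) (V m j) (UO (m + 1)) | j. 1 \<le> j \<and> j \<le> m})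
       in v1 / 2 > real_of_int c \<and> real_of_int c > v2 / 2 \<and>
          int m = c - 1 \<and>
          b = (real_of_int c - 1) * real_of_int c / (v1 / 2) \<and>
          \<alpha> = real_of_int c / (v2 / 2) * (v2 / 2 - real_of_int \<lfloor>v2 / 2\<rfloor>) \<and>
          Y = mix (b / real m) (UE m) (return_pmf 0) \<and>
          X \<in> conv_pmf (insert (mix \<alpha> (UO (m + 1)) (UO m)) XS)))
    \<and> (nash v1 v2 X Y \<longrightarrow>
         payoff1 v1 X Y = v1 + 1 - 2 * real_of_int \<lceil>v2 / 2\<rceil> \<and> payoff2 v2 Y X = 0)"
proof -
  define x y where "x = v2 / 2" and "y = v1 / 2"
  have v: "v1 = 2 * y" "v2 = 2 * x" and x: "0 < x" "x \<le> y"
    using assms(1,2) unfolding x_def y_def by simp_all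
  note profile = nash_iff_profile[OF x assms(3-11)]
  have payoffs: "payoff1 (2*y) X Y = 2*y + 1 - 2 * real_of_int \<lceil>x\<rceil> \<and> payoff2 (2*x) Y X = 0"
    if "nash (2*y) (2*x) X Y"
  proof -
    note S = nash_shape[OF x assms(3-7,10,11) that]
    have "\<lceil>x\<rceil> = int m + 1" using S(1,2) by (intro ceiling_eq) auto
    thus ?thesis using S(7,8) by simp
  qed
  show ?thesis
    unfolding x_def[symmetric] y_def[symmetric] characterisation_iff_profile[OF x(1) assms(3)]
    unfolding v using profile payoffs by blast
qed

end
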